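(* Let $\gamma,\sigma:[a,b]\to V$ be continuous paths of bounded variation. (1) For $\phi(k)=\Gamma(\frac k2+1)$ the $\phi$-signature kernel is well defined, and there is a constant $C$ such that for all $N$ and $(s,t)$, \[ \left|K_\phi^{\gamma,\sigma}(s,t)-K_\phi^{(N)}(s,t)\right|\le C\left(\frac{e}{2N+2}\right)^{(N+1)/2}e_{N+1}\left(L_s(\gamma)L_t(\sigma)\right),\qquad e_{N+1}(x):=\sum_{k=N+1}^\infty\frac{x^k}{k!}. \] (2) For $m\in\mathbb{R}_+$ and $\phi(k)=\frac{\Gamma(m+1)\Gamma(k+1)}{\Gamma(k+m+1)}$ the $\phi$-signature kernel is well defined and \[ \left|K_\phi^{\gamma,\sigma}(s,t)-K_\phi^{(N)}(s,t)\right|\le\frac{\Gamma(m+1)}{(L_s(\gamma)L_t(\sigma))^{m/2}}\,I_m^{(N+1)}\left(2\sqrt{L_s(\gamma)L_t(\sigma)}\right), \] where $I_m^{(N+1)}(z):=\left(\frac z2\right)^m\sum_{k=N+1}^\infty\frac{(z^2/4)^k}{\Gamma(k+m+1)\Gamma(k+1)}$ is the tail of the series of the modified Bessel function $I_m$.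
   Context: $V$ is a finite-dimensional real inner product space, $\langle\cdot,\cdot\rangle_k$ the induced Hilbert–Schmidt inner product on $V^{\otimes k}$. Signature: $S(\gamma)^0=1$, $S(\gamma)^k_{s,t}=\int_{s<u_1<\dots<u_k<t}d\gamma_{u_1}\otimes\cdots\otimes d\gamma_{u_k}$. $K_\phi^{\gamma,\sigma}(s,t)=\sum_{k\ge0}\phi(k)\langle S(\gamma)^k_{a,s},S(\sigma)^k_{a,t}\rangle_k$ and $K_\phi^{(N)}(s,t)$ is the same sum restricted to $k\le N$. $L_s(\gamma)$ is the length of $\gamma|_{[a,s]}$. *)

theory Defs
  imports "HOL-Analysis.Analysis"
begin

definition is_partition :: "real \<Rightarrow> real \<Rightarrow> real list \<Rightarrow> bool" where
  "is_partition a b xs \<longleftrightarrow> xs \<noteq> [] \<and> hd xs = a \<and> last xs = b \<and> sorted_wrt (<) xs"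

definition is_tagging :: "real list \<Rightarrow> real list \<Rightarrow> bool" where
  "is_tagging xs ts \<longleftrightarrow> length ts + 1 = length xs \<and>
     (\<forall>j < length ts. xs ! j \<le> ts ! j \<and> ts ! j \<le> xs ! Suc j)"

definition mesh_below :: "real list \<Rightarrow> real \<Rightarrow> bool" where
  "mesh_below xs \<delta> \<longleftrightarrow> (\<forall>j. Suc j < length xs \<longrightarrow> xs ! Suc j - xs ! j < \<delta>)"

definition variation_sum :: "(real \<Rightarrow> 'a::real_normed_vector) \<Rightarrow> real list \<Rightarrow> real" where
  "variation_sum \<gamma> xs = (\<Sum>j < length xs - 1. norm (\<gamma> (xs ! Suc j) - \<gamma> (xs ! j)))"

definition bounded_variation_on :: "(real \<Rightarrow> 'a::real_normed_vector) \<Rightarrow> real \<Rightarrow> real \<Rightarrow> bool" where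
  "bounded_variation_on \<gamma> a b \<longleftrightarrow> bdd_above {variation_sum \<gamma> xs | xs. is_partition a b xs}"

definition path_length :: "(real \<Rightarrow> 'a::real_normed_vector) \<Rightarrow> real \<Rightarrow> real \<Rightarrow> real" where
  "path_length \<gamma> a s = Sup {variation_sum \<gamma> xs | xs. is_partition a s xs}"

definition RS_sum :: "(real \<Rightarrow> real) \<Rightarrow> (real \<Rightarrow> real) \<Rightarrow> real list \<Rightarrow> real list \<Rightarrow> real" where
  "RS_sum f g xs ts = (\<Sum>j < length ts. f (ts ! j) * (g (xs ! Suc j) - g (xs ! j)))"

definition has_RS_integral :: "(real \<Rightarrow> real) \<Rightarrow> (real \<Rightarrow> real) \<Rightarrow> real \<Rightarrow> real \<Rightarrow> real \<Rightarrow> bool" where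
  "has_RS_integral f g a b I \<longleftrightarrow>
     (\<forall>\<epsilon>>0. \<exists>\<delta>>0. \<forall>xs ts. is_partition a b xs \<and> is_tagging xs ts \<and> mesh_below xs \<delta> \<longrightarrow>
        \<bar>RS_sum f g xs ts - I\<bar> < \<epsilon>)"

definition RS_integral :: "(real \<Rightarrow> real) \<Rightarrow> (real \<Rightarrow> real) \<Rightarrow> real \<Rightarrow> real \<Rightarrow> real" where
  "RS_integral f g a b = (THE I. has_RS_integral f g a b I)"

text \<open>\<open>sig_rev \<gamma> a w t\<close> is the coordinate of \<open>S(\<gamma>)^k_{a,t}\<close> (k = length w) along
  \<open>e_{i_1} \<otimes> \<dots> \<otimes> e_{i_k}\<close>, where w = [i_k, ..., i_1] is the reversed word:
  \<open>\<integral>_{a<u_1<\<dots><u_k<t} d\<gamma>^{i_1}_{u_1} \<dots> d\<gamma>^{i_k}_{u_k}\<close>, computed by iterating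
  Riemann--Stieltjes integrals.\<close>
fun sig_rev :: "(real \<Rightarrow> 'a::euclidean_space) \<Rightarrow> real \<Rightarrow> 'a list \<Rightarrow> real \<Rightarrow> real" where
  "sig_rev \<gamma> a [] t = 1"
| "sig_rev \<gamma> a (i # w) t = RS_integral (\<lambda>u. sig_rev \<gamma> a w u) (\<lambda>u. \<gamma> u \<bullet> i) a t"

definition sig_coord :: "(real \<Rightarrow> 'a::euclidean_space) \<Rightarrow> real \<Rightarrow> real \<Rightarrow> 'a list \<Rightarrow> real" where
  "sig_coord \<gamma> a t w = sig_rev \<gamma> a (rev w) t"

text \<open>Words of length k over the orthonormal basis: index set of a basis of \<open>V^{\<otimes>k}\<close>.\<close>
definition words :: "nat \<Rightarrow> 'a::euclidean_space list set" where
  "words k = {w. length w = k \<and> set w \<subseteq> Basis}"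

text \<open>Hilbert--Schmidt inner product \<open>\<langle>S(\<gamma>)^k_{a,s}, S(\<sigma>)^k_{a,t}\<rangle>_k\<close>, expanded in the
  orthonormal product basis \<open>{e_{i_1}\<otimes>\<dots>\<otimes>e_{i_k}}\<close>.\<close>
definition sig_inner :: "(real \<Rightarrow> 'a::euclidean_space) \<Rightarrow> (real \<Rightarrow> 'a) \<Rightarrow> real \<Rightarrow> nat \<Rightarrow> real \<Rightarrow> real \<Rightarrow> real" where
  "sig_inner \<gamma> \<sigma> a k s t = (\<Sum>w \<in> words k. sig_coord \<gamma> a s w * sig_coord \<sigma> a t w)"

definition phi_sig_kernel_welldef ::
  "(nat \<Rightarrow> real) \<Rightarrow> (real \<Rightarrow> 'a::euclidean_space) \<Rightarrow> (real \<Rightarrow> 'a) \<Rightarrow> real \<Rightarrow> real \<Rightarrow> real \<Rightarrow> bool" where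
  "phi_sig_kernel_welldef \<phi> \<gamma> \<sigma> a s t \<longleftrightarrow> summable (\<lambda>k. \<phi> k * sig_inner \<gamma> \<sigma> a k s t)"

definition phi_sig_kernel ::
  "(nat \<Rightarrow> real) \<Rightarrow> (real \<Rightarrow> 'a::euclidean_space) \<Rightarrow> (real \<Rightarrow> 'a) \<Rightarrow> real \<Rightarrow> real \<Rightarrow> real \<Rightarrow> real" where
  "phi_sig_kernel \<phi> \<gamma> \<sigma> a s t = (\<Sum>k. \<phi> k * sig_inner \<gamma> \<sigma> a k s t)"

definition phi_sig_kernel_trunc ::
  "(nat \<Rightarrow> real) \<Rightarrow> nat \<Rightarrow> (real \<Rightarrow> 'a::euclidean_space) \<Rightarrow> (real \<Rightarrow> 'a) \<Rightarrow> real \<Rightarrow> real \<Rightarrow> real \<Rightarrow> real" where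
  "phi_sig_kernel_trunc \<phi> N \<gamma> \<sigma> a s t = (\<Sum>k\<le>N. \<phi> k * sig_inner \<gamma> \<sigma> a k s t)"

definition exp_tail :: "nat \<Rightarrow> real \<Rightarrow> real" where
  "exp_tail M x = (\<Sum>j. x ^ (j + M) / fact (j + M))"

definition bessel_I_tail :: "real \<Rightarrow> nat \<Rightarrow> real \<Rightarrow> real" where
  "bessel_I_tail m M z = (z / 2) powr m *
     (\<Sum>j. (z\<^sup>2 / 4) ^ (j + M) / (Gamma (real (j + M) + m + 1) * Gamma (real (j + M) + 1)))"

end

theory Submission
  imports Defs
begin

text \<open>
  The level-\<open>k\<close> signature of a path of length \<open>L\<close> has Hilbert--Schmidt norm at most
  \<open>L^k/k!\<close>. This follows by induction on \<open>k\<close> from the recursion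
  \<open>S^{k+1}_t = \<integral> S^k \<otimes> d\<gamma>\<close>: every Riemann--Stieltjes sum approximating level \<open>k + 1\<close>
  is dominated, term by term, by the increments of \<open>L_u^{k+1}/(k+1)!\<close>, which telescope.
  Cauchy--Schwarz then gives \<open>|\<langle>S(\<gamma>)^k_{a,s}, S(\<sigma>)^k_{a,t}\<rangle>| \<le> X^k/(k!)^2\<close> with
  \<open>X = L_s(\<gamma>) L_t(\<sigma>)\<close>, and both tail estimates are comparisons of series.
  For \<open>\<phi>(k) = \<Gamma>(k/2+1)\<close> one needs \<open>\<Gamma>(k/2+1)/k! \<le> B (e/(2k))^{k/2}\<close>, a Stirling-type
  bound whose right-hand side decreases in \<open>k\<close>; for \<open>\<phi>(k) = \<Gamma>(m+1)k!/\<Gamma>(k+m+1)\<close> the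
  dominating series is \<open>\<Gamma>(m+1) \<Sigma> X^k/(\<Gamma>(k+m+1)k!)\<close>, the Bessel series at \<open>z = 2\<surd>X\<close>.
\<close>

lemma partition_nth_less:
  assumes "is_partition a t xs" "i < j" "j < length xs"
  shows "xs ! i < xs ! j"
  using assms sorted_wrt_nth_less unfolding is_partition_def by blast

lemma partition_nth_0: "is_partition a t xs \<Longrightarrow> xs ! 0 = a"
  unfolding is_partition_def by (metis hd_conv_nth)

lemma partition_nth_last: "is_partition a t xs \<Longrightarrow> xs ! (length xs - 1) = t"
  unfolding is_partition_def by (metis last_conv_nth)

lemma partition_length_pos: "is_partition a t xs \<Longrightarrow> length xs > 0"
  unfolding is_partition_def by simp

lemma partition_nth_bounds:
  assumes "is_partition a t xs" "i < length xs"
  shows "a \<le> xs ! i \<and> xs ! i \<le> t"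
proof -
  have "xs ! 0 \<le> xs ! i"
    using partition_nth_less[OF assms(1), of 0 i] assms by (cases "i = 0") auto
  moreover have "xs ! i \<le> xs ! (length xs - 1)"
  proof -
    have "i < length xs - 1 \<or> i = length xs - 1" using assms by linarith
    moreover have "length xs - 1 < length xs" using assms by linarith
    ultimately show ?thesis using partition_nth_less[OF assms(1), of i "length xs - 1"] by force
  qed
  ultimately show ?thesis using partition_nth_0[OF assms(1)] partition_nth_last[OF assms(1)] by simp
qed

lemma partition_set_subset: "is_partition a t xs \<Longrightarrow> set xs \<subseteq> {a..t}"
  using partition_nth_bounds by (auto simp: in_set_conv_nth)

lemma partition_degenerate:
  assumes "is_partition a a xs" shows "xs = [a]"
proof -
  have "length xs = 1"
  proof (rule ccontr)
    assume "length xs \<noteq> 1"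
    then have "0 < length xs - 1" "length xs - 1 < length xs" using partition_length_pos[OF assms] by linarith+
    then have "xs ! 0 < xs ! (length xs - 1)" using partition_nth_less[OF assms] by blast
    then show False using partition_nth_0[OF assms] partition_nth_last[OF assms] by simp
  qed
  then show ?thesis using assms unfolding is_partition_def
    by (cases xs) auto
qed

lemma partition_snoc:
  assumes "is_partition a x xs" "x < y"
  shows "is_partition a y (xs @ [y])"
proof -
  have "\<forall>u\<in>set xs. u < y" using partition_set_subset[OF assms(1)] assms(2) by auto
  then show ?thesis using assms(1) unfolding is_partition_def
    by (simp add: sorted_wrt_append)
qed

lemma variation_sum_snoc:
  assumes "xs \<noteq> []"
  shows "variation_sum p (xs @ [z]) = variation_sum p xs + norm (p z - p (last xs))"
proof -
  obtain m where m: "length xs = Suc m" using assms by (cases xs) auto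
  have "variation_sum p (xs @ [z]) = (\<Sum>j<Suc m. norm (p ((xs@[z]) ! Suc j) - p ((xs@[z]) ! j)))"
    unfolding variation_sum_def using m by simp
  also have "\<dots> = (\<Sum>j<m. norm (p (xs ! Suc j) - p (xs ! j))) + norm (p z - p (last xs))"
    using m assms by (simp add: nth_append last_conv_nth)
  also have "(\<Sum>j<m. norm (p (xs ! Suc j) - p (xs ! j))) = variation_sum p xs"
    unfolding variation_sum_def using m by simp
  finally show ?thesis .
qed

lemma fine_tagged_partition_exists:
  fixes a t \<delta> :: real
  assumes "a \<le> t" "\<delta> > 0"
  shows "\<exists>xs ts. is_partition a t xs \<and> is_tagging xs ts \<and> mesh_below xs \<delta>"
proof (cases "a = t")
  case True
  then show ?thesis
    by (intro exI[of _ "[a]"] exI[of _ "[]"]) (auto simp: is_partition_def is_tagging_def mesh_below_def)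
next
  case False
  then have lt: "a < t" using assms by simp
  obtain n :: nat where n: "(t - a) / \<delta> < n" using reals_Archimedean2 by blast
  then have npos: "n > 0" using lt assms by (cases n) (auto simp: field_simps)
  define u where "u j = a + (t - a) * real j / real n" for j
  define xs where "xs = map u [0..<Suc n]"
  have len: "length xs = Suc n" by (simp add: xs_def)
  have mono: "u i < u j" if "i < j" for i j
  proof -
    have "(t - a) * real i < (t - a) * real j" using that lt by simp
    then have "(t - a) * real i / n < (t - a) * real j / n"
      using npos by (simp add: divide_strict_right_mono)
    then show ?thesis by (simp add: u_def)
  qed
  have part: "is_partition a t xs"
    unfolding is_partition_def xs_def
  proof (intro conjI)
    show "sorted_wrt (<) (map u [0..<Suc n])"
      unfolding sorted_wrt_map
      by (rule sorted_wrt_mono_rel[OF _ sorted_wrt_upt]) (use mono in auto)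
  qed (use npos in \<open>auto simp: u_def hd_map last_map\<close>)
  have xsn: "xs ! j = u j" if "j < Suc n" for j
    using that by (simp add: xs_def del: upt_Suc)
  have tag: "is_tagging xs (take n xs)"
    unfolding is_tagging_def using len xsn mono[of j "Suc j" for j] by (auto intro: less_imp_le)
  have "(t - a) / real n < \<delta>" using n npos assms lt by (simp add: field_simps)
  moreover have "xs ! Suc j - xs ! j = (t - a) / real n" if "j < n" for j
    using that xsn[of j] xsn[of "Suc j"] npos by (simp add: u_def field_simps)
  ultimately have mesh: "mesh_below xs \<delta>"
    unfolding mesh_below_def using len by auto
  show ?thesis using part tag mesh by blast
qed

section \<open>Path length\<close>

context
  fixes p :: "real \<Rightarrow> 'a::real_normed_vector" and a b :: real
  assumes bv: "bounded_variation_on p a b"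
begin

lemma bdd_above_variation_sums:
  assumes "a \<le> y" "y \<le> b"
  shows "bdd_above {variation_sum p xs | xs. is_partition a y xs}"
proof (cases "y = b")
  case True then show ?thesis using bv unfolding bounded_variation_on_def by simp
next
  case False
  then have yb: "y < b" using assms by simp
  obtain M where M: "\<And>z. z \<in> {variation_sum p xs | xs. is_partition a b xs} \<Longrightarrow> z \<le> M"
    using bv unfolding bounded_variation_on_def bdd_above_def by blast
  show ?thesis unfolding bdd_above_def
  proof (intro exI[of _ M] ballI)
    fix z assume "z \<in> {variation_sum p xs | xs. is_partition a y xs}"
    then obtain xs where xs: "is_partition a y xs" "z = variation_sum p xs" by blast
    have "is_partition a b (xs @ [b])" using partition_snoc[OF xs(1) yb] .
    then have "variation_sum p (xs @ [b]) \<le> M" using M by blast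
    moreover have "variation_sum p (xs @ [b]) = z + norm (p b - p y)"
      using variation_sum_snoc[of xs p b] xs unfolding is_partition_def by simp
    ultimately show "z \<le> M" using norm_ge_zero[of "p b - p y"] by linarith
  qed
qed

lemma path_length_start: "path_length p a a = 0"
proof -
  have "{variation_sum p xs | xs. is_partition a a xs} = {0}"
  proof -
    have "is_partition a a [a]" by (simp add: is_partition_def)
    moreover have "variation_sum p [a] = 0" by (simp add: variation_sum_def)
    ultimately show ?thesis
    proof (intro set_eqI iffI)
      fix z assume "z \<in> {variation_sum p xs | xs. is_partition a a xs}"
      then obtain xs where "is_partition a a xs" "z = variation_sum p xs" by blast
      then show "z \<in> {0}" using partition_degenerate[of a xs] \<open>variation_sum p [a] = 0\<close> by simp
    qed auto
  qed
  then show ?thesis unfolding path_length_def by simp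
qed

lemma path_length_add_norm_le:
  assumes "a \<le> x" "x \<le> y" "y \<le> b"
  shows "path_length p a x + norm (p y - p x) \<le> path_length p a y"
proof (cases "x = y")
  case True then show ?thesis by simp
next
  case False
  then have xy: "x < y" using assms by simp
  have ne: "{variation_sum p xs | xs. is_partition a x xs} \<noteq> {}"
  proof -
    have "is_partition a x (if a = x then [a] else [a, x])"
      using assms by (auto simp: is_partition_def)
    then show ?thesis by blast
  qed
  have "path_length p a x \<le> path_length p a y - norm (p y - p x)"
    unfolding path_length_def
  proof (rule cSup_least[OF ne])
    fix z assume "z \<in> {variation_sum p xs | xs. is_partition a x xs}"
    then obtain xs where xs: "is_partition a x xs" "z = variation_sum p xs" by blast
    have pa: "is_partition a y (xs @ [y])" using partition_snoc[OF xs(1) xy] .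
    have "variation_sum p (xs @ [y]) = z + norm (p y - p x)"
      using variation_sum_snoc[of xs p y] xs unfolding is_partition_def by simp
    moreover have "variation_sum p (xs @ [y]) \<le> Sup {variation_sum p xs | xs. is_partition a y xs}"
      by (rule cSup_upper) (use pa bdd_above_variation_sums[of y] assms in auto)
    ultimately show "z \<le> Sup {variation_sum p xs | xs. is_partition a y xs} - norm (p y - p x)"
      by simp
  qed
  then show ?thesis by simp
qed

lemma path_length_nonneg:
  assumes "a \<le> y" "y \<le> b" shows "0 \<le> path_length p a y"
  using path_length_add_norm_le[of a y] assms path_length_start norm_ge_zero[of "p y - p a"] by linarith

lemma path_length_mono:
  assumes "a \<le> x" "x \<le> y" "y \<le> b"
  shows "path_length p a x \<le> path_length p a y"
  using path_length_add_norm_le[OF assms] norm_ge_zero[of "p y - p x"] by linarith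

end

section \<open>Partitions as finite sets of points\<close>

text \<open>A partition of \<open>[a, t]\<close> is represented by its finite set of division points, so that
  common refinements are unions.\<close>

definition set_partition :: "real \<Rightarrow> real \<Rightarrow> real set \<Rightarrow> bool" where
  "set_partition a t S \<longleftrightarrow> finite S \<and> a \<in> S \<and> t \<in> S \<and> S \<subseteq> {a..t}"

definition next_pt :: "real set \<Rightarrow> real \<Rightarrow> real" where
  "next_pt S x = Min {y\<in>S. x < y}"

definition prev_pt :: "real set \<Rightarrow> real \<Rightarrow> real" where
  "prev_pt S x = Max {y\<in>S. y \<le> x}"

definition part_sum :: "(real \<Rightarrow> real \<Rightarrow> real) \<Rightarrow> real \<Rightarrow> real set \<Rightarrow> real" where
  "part_sum F t S = (\<Sum>x\<in>S-{t}. F x (next_pt S x))"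

definition left_RS_sum :: "(real \<Rightarrow> real) \<Rightarrow> (real \<Rightarrow> real) \<Rightarrow> real \<Rightarrow> real set \<Rightarrow> real" where
  "left_RS_sum f g t S = part_sum (\<lambda>x x'. f x * (g x' - g x)) t S"

definition set_mesh_below :: "real set \<Rightarrow> real \<Rightarrow> real \<Rightarrow> bool" where
  "set_mesh_below S t \<delta> \<longleftrightarrow> (\<forall>x\<in>S-{t}. next_pt S x - x < \<delta>)"

lemma set_partition_le: "set_partition a t S \<Longrightarrow> a \<le> t"
  unfolding set_partition_def by auto

lemma set_partition_lt: "set_partition a t S \<Longrightarrow> x \<in> S - {t} \<Longrightarrow> x < t \<and> a \<le> x"
  unfolding set_partition_def by force

lemma next_pt_props_lt:
  assumes "set_partition a t S" "x < t"
  shows "next_pt S x \<in> S \<and> x < next_pt S x \<and> (\<forall>y\<in>S. x < y \<longrightarrow> next_pt S x \<le> y)"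
proof -
  have fin: "finite {y\<in>S. x < y}" using assms(1) unfolding set_partition_def by simp
  have "t \<in> {y\<in>S. x < y}" using assms unfolding set_partition_def by auto
  then show ?thesis unfolding next_pt_def using Min_in[OF fin] Min_le[OF fin] by auto
qed

lemma next_pt_props:
  assumes "set_partition a t S" "x \<in> S - {t}"
  shows "next_pt S x \<in> S \<and> x < next_pt S x \<and> (\<forall>y\<in>S. x < y \<longrightarrow> next_pt S x \<le> y)"
  using next_pt_props_lt[OF assms(1)] set_partition_lt[OF assms] by blast

lemma next_pt_eqI:
  assumes "finite S" "y \<in> S" "x < y" "\<And>z. z \<in> S \<Longrightarrow> x < z \<Longrightarrow> y \<le> z"
  shows "next_pt S x = y"
  unfolding next_pt_def by (rule Min_eqI) (use assms in auto)

lemma prev_pt_props: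
  assumes "set_partition a t P" "a \<le> x"
  shows "prev_pt P x \<in> P \<and> prev_pt P x \<le> x \<and> (\<forall>y\<in>P. y \<le> x \<longrightarrow> y \<le> prev_pt P x)"
proof -
  have fin: "finite {y\<in>P. y \<le> x}" using assms(1) unfolding set_partition_def by simp
  have "a \<in> {y\<in>P. y \<le> x}" using assms unfolding set_partition_def by auto
  then show ?thesis unfolding prev_pt_def using Max_in[OF fin] Max_ge[OF fin] by auto
qed

lemma prev_pt_self: "set_partition a t P \<Longrightarrow> x \<in> P \<Longrightarrow> prev_pt P x = x"
  unfolding prev_pt_def set_partition_def by (rule Max_eqI) auto

context
  fixes a t y :: real and S :: "real set"
  assumes S: "set_partition a t S" and y: "y \<in> {a..t}" "y \<notin> S"
begin

lemma prev_pt_nonmember: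
  shows "prev_pt S y \<in> S - {t}" and "prev_pt S y < y" and "next_pt S (prev_pt S y) = next_pt S y"
proof -
  have p: "prev_pt S y \<in> S" "prev_pt S y \<le> y" "\<And>z. z \<in> S \<Longrightarrow> z \<le> y \<Longrightarrow> z \<le> prev_pt S y"
    using prev_pt_props[OF S] y by auto
  show lt: "prev_pt S y < y" using p y by (cases "prev_pt S y = y") auto
  then show "prev_pt S y \<in> S - {t}" using p y by auto
  have yt: "y < t" using S y unfolding set_partition_def by (cases "y = t") auto
  have n: "next_pt S y \<in> S" "y < next_pt S y" "\<And>z. z \<in> S \<Longrightarrow> y < z \<Longrightarrow> next_pt S y \<le> z"
    using next_pt_props_lt[OF S yt] by auto
  show "next_pt S (prev_pt S y) = next_pt S y"
  proof (rule next_pt_eqI)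
    show "finite S" using S unfolding set_partition_def by simp
    show "next_pt S y \<in> S" "prev_pt S y < next_pt S y" using n lt by auto
    fix z assume "z \<in> S" "prev_pt S y < z"
    moreover have "z \<noteq> y" using \<open>z \<in> S\<close> y by auto
    ultimately show "next_pt S y \<le> z" using p(3) n(3) by force
  qed
qed

lemma next_pt_insert:
  shows "next_pt (insert y S) y = next_pt S y"
    and "x \<in> S - {t} \<Longrightarrow> next_pt (insert y S) x = (if x = prev_pt S y then y else next_pt S x)"
proof -
  have fin: "finite (insert y S)" using S unfolding set_partition_def by simp
  have yt: "y < t" using S y unfolding set_partition_def by (cases "y = t") auto
  have p: "\<And>z. z \<in> S \<Longrightarrow> z \<le> y \<Longrightarrow> z \<le> prev_pt S y" using prev_pt_props[OF S] y by auto
  show "next_pt (insert y S) y = next_pt S y"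
    by (rule next_pt_eqI[OF fin]) (use next_pt_props_lt[OF S yt] in auto)
  assume x: "x \<in> S - {t}"
  show "next_pt (insert y S) x = (if x = prev_pt S y then y else next_pt S x)"
  proof (cases "x = prev_pt S y")
    case True
    have "next_pt (insert y S) x = y"
    proof (rule next_pt_eqI[OF fin])
      show "y \<in> insert y S" "x < y" using True prev_pt_nonmember(2) by auto
      fix z assume "z \<in> insert y S" "x < z"
      then show "y \<le> z" using p[of z] True by force
    qed
    then show ?thesis using True by simp
  next
    case False
    have n: "next_pt S x \<in> S" "x < next_pt S x" "\<And>z. z \<in> S \<Longrightarrow> x < z \<Longrightarrow> next_pt S x \<le> z"
      using next_pt_props[OF S x] by auto
    have "next_pt S x \<le> y" if "x < y"
    proof -
      have "x < prev_pt S y" using p[of x] x that False by force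
      then show ?thesis using n(3)[of "prev_pt S y"] prev_pt_nonmember(1,2) by auto
    qed
    then have "next_pt (insert y S) x = next_pt S x"
      by (intro next_pt_eqI[OF fin]) (use n in auto)
    then show ?thesis using False by simp
  qed
qed

lemma part_sum_insert:
  "part_sum F t (insert y S)
     = part_sum F t S - F (prev_pt S y) (next_pt S y) + F (prev_pt S y) y + F y (next_pt S y)"
proof -
  define p where "p = prev_pt S y"
  have fin: "finite S" using S unfolding set_partition_def by simp
  have yt: "y < t" using S y unfolding set_partition_def by (cases "y = t") auto
  have p: "p \<in> S - {t}" "next_pt S p = next_pt S y" using prev_pt_nonmember unfolding p_def by auto
  have "next_pt (insert y S) p = y" using next_pt_insert(2)[OF p(1)] by (simp add: p_def)
  have "insert y S - {t} = insert y (S - {t})" using yt by auto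
  then have "part_sum F t (insert y S) = F y (next_pt S y) + (\<Sum>x\<in>S - {t}. F x (next_pt (insert y S) x))"
    unfolding part_sum_def using fin y next_pt_insert(1) by simp
  also have "(\<Sum>x\<in>S - {t}. F x (next_pt (insert y S) x)) = F p y + (\<Sum>x\<in>S - {t} - {p}. F x (next_pt S x))"
    using sum.remove[OF _ p(1), of "\<lambda>x. F x (next_pt (insert y S) x)"] fin next_pt_insert(2)
      \<open>next_pt (insert y S) p = y\<close> by (simp add: p_def)
  also have "(\<Sum>x\<in>S - {t} - {p}. F x (next_pt S x)) = part_sum F t S - F p (next_pt S y)"
    using sum.remove[OF _ p(1), of "\<lambda>x. F x (next_pt S x)"] fin p(2) unfolding part_sum_def by simp
  finally show ?thesis by (simp add: p_def)
qed

lemma prev_pt_prev_pt: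
  assumes "P \<subseteq> S" "set_partition a t P"
  shows "prev_pt P (prev_pt S y) = prev_pt P y"
proof -
  have "{z\<in>P. z \<le> y} = {z\<in>P. z \<le> prev_pt S y}"
    using assms prev_pt_props[OF S] prev_pt_nonmember(2) y by fastforce
  then show ?thesis unfolding prev_pt_def by simp
qed

end

lemma left_RS_sum_union:
  assumes P: "set_partition a t P" and D: "finite D" "D \<subseteq> {a..t}"
  shows "left_RS_sum f g t (P \<union> D)
           = left_RS_sum f g t P + part_sum (\<lambda>x x'. (f x - f (prev_pt P x)) * (g x' - g x)) t (P \<union> D)"
  using D
proof (induction D rule: finite_induct)
  case empty
  have "part_sum (\<lambda>x x'. (f x - f (prev_pt P x)) * (g x' - g x)) t P = 0"
    unfolding part_sum_def using prev_pt_self[OF P] set_partition_lt[OF P] by (intro sum.neutral) auto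
  then show ?case by simp
next
  case (insert y D)
  let ?S = "P \<union> D"
  have S: "set_partition a t ?S" using P insert unfolding set_partition_def by auto
  have IH: "left_RS_sum f g t ?S = left_RS_sum f g t P + part_sum (\<lambda>x x'. (f x - f (prev_pt P x)) * (g x' - g x)) t ?S"
    using insert by auto
  show ?case
  proof (cases "y \<in> ?S")
    case True
    then have "P \<union> insert y D = ?S" by auto
    then show ?thesis using IH by simp
  next
    case False
    have y: "y \<in> {a..t}" using insert.prems by auto
    have "P \<union> insert y D = insert y ?S" by auto
    moreover have "left_RS_sum f g t (insert y ?S)
        = left_RS_sum f g t ?S + (f y - f (prev_pt ?S y)) * (g (next_pt ?S y) - g y)"
      unfolding left_RS_sum_def part_sum_insert[OF S y False] by (simp add: algebra_simps)
    moreover have "part_sum (\<lambda>x x'. (f x - f (prev_pt P x)) * (g x' - g x)) t (insert y ?S)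
        = part_sum (\<lambda>x x'. (f x - f (prev_pt P x)) * (g x' - g x)) t ?S
          + (f y - f (prev_pt ?S y)) * (g (next_pt ?S y) - g y)"
      unfolding part_sum_insert[OF S y False] prev_pt_prev_pt[OF S y False Un_upper1 P] by (simp add: algebra_simps)
    ultimately show ?thesis using IH by simp
  qed
qed

lemma left_RS_sum_refine:
  assumes P: "set_partition a t P" and S: "set_partition a t S" and PS: "P \<subseteq> S"
  shows "left_RS_sum f g t S = left_RS_sum f g t P + part_sum (\<lambda>x x'. (f x - f (prev_pt P x)) * (g x' - g x)) t S"
proof -
  have "P \<union> S = S" using PS by auto
  then show ?thesis using left_RS_sum_union[OF P, of S f g] S unfolding set_partition_def by auto
qed

lemma part_sum_two_points:
  assumes "a \<le> t"
  shows "part_sum F t {a, t} = (if a = t then 0 else F a t)"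
proof (cases "a = t")
  case True then show ?thesis by (simp add: part_sum_def)
next
  case False
  then have "{a, t} - {t} = {a}" by auto
  moreover have "next_pt {a, t} a = t" by (rule next_pt_eqI) (use False assms in auto)
  ultimately show ?thesis using False by (simp add: part_sum_def)
qed

lemma part_sum_telescope:
  assumes S: "set_partition a t S"
  shows "part_sum (\<lambda>x x'. G x' - G x) t S = G t - G a"
proof -
  have at: "a \<le> t" using set_partition_le[OF S] .
  have P: "set_partition a t {a, t}" using at unfolding set_partition_def by auto
  have sub: "{a, t} \<subseteq> S" using S unfolding set_partition_def by auto
  have "left_RS_sum (\<lambda>_. 1) G t S = left_RS_sum (\<lambda>_. 1) G t {a, t}"
    using left_RS_sum_refine[OF P S sub, of "\<lambda>_. 1" G] by (simp add: part_sum_def)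
  then show ?thesis unfolding left_RS_sum_def using part_sum_two_points[OF at] by (auto split: if_splits)
qed

lemma part_sum_abs_le:
  assumes "\<And>x. x \<in> S - {t} \<Longrightarrow> \<bar>F x (next_pt S x)\<bar> \<le> G x (next_pt S x)"
  shows "\<bar>part_sum F t S\<bar> \<le> part_sum G t S"
  unfolding part_sum_def
proof -
  have "\<bar>\<Sum>x\<in>S - {t}. F x (next_pt S x)\<bar> \<le> (\<Sum>x\<in>S - {t}. \<bar>F x (next_pt S x)\<bar>)" by (rule sum_abs)
  also have "\<dots> \<le> (\<Sum>x\<in>S - {t}. G x (next_pt S x))" by (rule sum_mono) (rule assms)
  finally show "\<bar>\<Sum>x\<in>S - {t}. F x (next_pt S x)\<bar> \<le> (\<Sum>x\<in>S - {t}. G x (next_pt S x))" .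
qed

lemma part_sum_mono:
  assumes "\<And>x. x \<in> S - {t} \<Longrightarrow> F x (next_pt S x) \<le> G x (next_pt S x)"
  shows "part_sum F t S \<le> part_sum G t S"
  unfolding part_sum_def by (rule sum_mono) (rule assms)

lemma left_RS_sum_refine_bound:
  assumes P: "set_partition a t P" and S: "set_partition a t S" and PS: "P \<subseteq> S"
    and fP: "set_mesh_below P t \<delta>"
    and uc: "\<And>x y. x \<in> {a..t} \<Longrightarrow> y \<in> {a..t} \<Longrightarrow> \<bar>x - y\<bar> < \<delta> \<Longrightarrow> \<bar>f x - f y\<bar> \<le> \<eta>"
  shows "\<bar>left_RS_sum f g t S - left_RS_sum f g t P\<bar> \<le> \<eta> * part_sum (\<lambda>x x'. \<bar>g x' - g x\<bar>) t S"
proof -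
  have "\<bar>part_sum (\<lambda>x x'. (f x - f (prev_pt P x)) * (g x' - g x)) t S\<bar> \<le> part_sum (\<lambda>x x'. \<eta> * \<bar>g x' - g x\<bar>) t S"
  proof (rule part_sum_abs_le)
    fix x assume x: "x \<in> S - {t}"
    have xr: "x < t" "a \<le> x" using set_partition_lt[OF S x] by auto
    define q where "q = prev_pt P x"
    have q: "q \<in> P" "q \<le> x" "\<forall>y\<in>P. y \<le> x \<longrightarrow> y \<le> q" using prev_pt_props[OF P xr(2)] unfolding q_def by auto
    have qt: "q \<in> P - {t}" using q xr by auto
    have nq: "next_pt P q \<in> P" "q < next_pt P q" using next_pt_props[OF P qt] by auto
    have "x < next_pt P q"
    proof (rule ccontr)
      assume "\<not> x < next_pt P q"
      then have "next_pt P q \<le> q" using q(3) nq(1) by auto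
      then show False using nq(2) by simp
    qed
    moreover have "next_pt P q - q < \<delta>" using fP qt unfolding set_mesh_below_def by blast
    ultimately have "\<bar>x - q\<bar> < \<delta>" using q(2) by auto
    moreover have "q \<in> {a..t}" using q(1) P unfolding set_partition_def by auto
    ultimately have "\<bar>f x - f q\<bar> \<le> \<eta>" using uc[of x q] xr by auto
    then show "\<bar>(f x - f (prev_pt P x)) * (g (next_pt S x) - g x)\<bar> \<le> \<eta> * \<bar>g (next_pt S x) - g x\<bar>"
      unfolding q_def[symmetric] abs_mult by (simp add: mult_right_mono)
  qed
  also have "\<dots> = \<eta> * part_sum (\<lambda>x x'. \<bar>g x' - g x\<bar>) t S"
    unfolding part_sum_def by (simp add: sum_distrib_left)
  finally show ?thesis using left_RS_sum_refine[OF P S PS] by simp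
qed

lemma set_partition_Un: "set_partition a t P \<Longrightarrow> set_partition a t Q \<Longrightarrow> set_partition a t (P \<union> Q)"
  unfolding set_partition_def by auto

lemma set_partition_concat:
  assumes P1: "set_partition a s P1" and P2: "set_partition s t P2"
  shows "set_partition a t (P1 \<union> P2)" and "part_sum F t (P1 \<union> P2) = part_sum F s P1 + part_sum F t P2"
    and "set_mesh_below P1 s d \<Longrightarrow> set_mesh_below P2 t d \<Longrightarrow> set_mesh_below (P1 \<union> P2) t d"
proof -
  have f1: "finite P1" "a \<in> P1" "s \<in> P1" "P1 \<subseteq> {a..s}" using P1 unfolding set_partition_def by auto
  have f2: "finite P2" "s \<in> P2" "t \<in> P2" "P2 \<subseteq> {s..t}" using P2 unfolding set_partition_def by auto
  have st: "s \<le> t" "a \<le> s" using f1 f2 by auto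
  show U: "set_partition a t (P1 \<union> P2)" using f1 f2 st unfolding set_partition_def by auto
  have fu: "finite (P1 \<union> P2)" using f1 f2 by simp
  have eq: "P1 \<union> P2 - {t} = (P1 - {s}) \<union> (P2 - {t})"
  proof -
    have "P1 - {s} \<subseteq> {a..<s}" using f1 by auto
    then show ?thesis using f1 f2 st by (cases "s = t") auto
  qed
  have disj: "(P1 - {s}) \<inter> (P2 - {t}) = {}" using f1 f2 by force
  have n1: "next_pt (P1 \<union> P2) x = next_pt P1 x" if x: "x \<in> P1 - {s}" for x
  proof -
    have m: "next_pt P1 x \<in> P1 \<and> x < next_pt P1 x \<and> (\<forall>z\<in>P1. x < z \<longrightarrow> next_pt P1 x \<le> z)" using next_pt_props[OF P1 x] .
    have "next_pt P1 x \<le> s" using m f1 x by auto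
    show ?thesis by (rule next_pt_eqI[OF fu]) (use m f2 \<open>next_pt P1 x \<le> s\<close> in force)+
  qed
  have n2: "next_pt (P1 \<union> P2) x = next_pt P2 x" if x: "x \<in> P2 - {t}" for x
  proof -
    have m: "next_pt P2 x \<in> P2 \<and> x < next_pt P2 x \<and> (\<forall>z\<in>P2. x < z \<longrightarrow> next_pt P2 x \<le> z)" using next_pt_props[OF P2 x] .
    have "s \<le> x" using x f2 by auto
    show ?thesis by (rule next_pt_eqI[OF fu]) (use m f1 \<open>s \<le> x\<close> in force)+
  qed
  show "part_sum F t (P1 \<union> P2) = part_sum F s P1 + part_sum F t P2"
    unfolding part_sum_def eq using f1 f2 disj n1 n2 by (simp add: sum.union_disjoint)
  show "set_mesh_below (P1 \<union> P2) t d" if h1: "set_mesh_below P1 s d" and h2: "set_mesh_below P2 t d"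
    unfolding set_mesh_below_def eq
  proof
    fix x assume "x \<in> (P1 - {s}) \<union> (P2 - {t})"
    then show "next_pt (P1 \<union> P2) x - x < d"
    proof
      assume x: "x \<in> P1 - {s}"
      then show ?thesis using n1[OF x] h1 unfolding set_mesh_below_def by auto
    next
      assume x: "x \<in> P2 - {t}"
      then show ?thesis using n2[OF x] h2 unfolding set_mesh_below_def by auto
    qed
  qed
qed

lemma partition_distinct: "is_partition a t xs \<Longrightarrow> distinct xs"
  unfolding is_partition_def strict_sorted_iff by blast

lemma next_pt_set_partition_nth:
  assumes xs: "is_partition a t xs" and j: "j < length xs - 1"
  shows "next_pt (set xs) (xs ! j) = xs ! Suc j"
proof (rule next_pt_eqI)
  show "xs ! Suc j \<in> set xs" "xs ! j < xs ! Suc j"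
    using j partition_nth_less[OF xs, of j "Suc j"] by auto
  fix z assume "z \<in> set xs" "xs ! j < z"
  then obtain i where i: "i < length xs" "z = xs ! i" "xs ! j < xs ! i" by (auto simp: in_set_conv_nth)
  have "\<not> i < j" using partition_nth_less[OF xs, of i j] i j by fastforce
  moreover have "i \<noteq> j" using i by auto
  ultimately have "Suc j \<le> i" by linarith
  then show "xs ! Suc j \<le> z" using partition_nth_less[OF xs, of "Suc j" i] i by (cases "Suc j = i") auto
qed simp

lemma set_partition_minus_last:
  assumes xs: "is_partition a t xs"
  shows "set xs - {t} = (\<lambda>j. xs ! j) ` {..<length xs - 1}"
proof -
  have "set xs = (\<lambda>j. xs ! j) ` {..<length xs}" by (auto simp: in_set_conv_nth)
  also have "{..<length xs} = insert (length xs - 1) {..<length xs - 1}"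
    using partition_length_pos[OF xs] by auto
  finally have "set xs = insert t ((\<lambda>j. xs ! j) ` {..<length xs - 1})"
    using partition_nth_last[OF xs] by simp
  moreover have "t \<notin> (\<lambda>j. xs ! j) ` {..<length xs - 1}"
    using partition_nth_less[OF xs, of _ "length xs - 1"] partition_nth_last[OF xs] by force
  ultimately show ?thesis by auto
qed

lemma set_partition_of_list:
  assumes xs: "is_partition a t xs"
  shows "set_partition a t (set xs)"
    and "mesh_below xs \<delta> \<Longrightarrow> set_mesh_below (set xs) t \<delta>"
    and "part_sum F t (set xs) = (\<Sum>j<length xs - 1. F (xs ! j) (xs ! Suc j))"
proof -
  show "set_partition a t (set xs)" unfolding set_partition_def using partition_set_subset[OF xs] xs
    unfolding is_partition_def by (auto simp: hd_in_set last_in_set)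
  have inj: "inj_on (\<lambda>j. xs ! j) {..<length xs - 1}"
    by (rule inj_on_nth[OF partition_distinct[OF xs]]) auto
  show "part_sum F t (set xs) = (\<Sum>j<length xs - 1. F (xs ! j) (xs ! Suc j))"
    unfolding part_sum_def set_partition_minus_last[OF xs] sum.reindex[OF inj]
    by (rule sum.cong) (auto simp: next_pt_set_partition_nth[OF xs] simp del: One_nat_def)
  show "set_mesh_below (set xs) t \<delta>" if "mesh_below xs \<delta>"
    using that next_pt_set_partition_nth[OF xs]
    unfolding set_mesh_below_def set_partition_minus_last[OF xs] mesh_below_def by auto
qed

lemma fine_set_partition_exists:
  assumes "a \<le> t" "\<delta> > 0"
  shows "\<exists>S. set_partition a t S \<and> set_mesh_below S t \<delta>"
  using fine_tagged_partition_exists[OF assms] set_partition_of_list by blast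

lemma set_mesh_below_mono: "set_mesh_below S t \<delta> \<Longrightarrow> \<delta> \<le> \<delta>' \<Longrightarrow> set_mesh_below S t \<delta>'"
  unfolding set_mesh_below_def by force

lemma fine_set_partition_sequence:
  assumes "a \<le> t"
  obtains Sq :: "nat \<Rightarrow> real set" where "\<And>n. set_partition a t (Sq n)"
    and "\<And>\<delta>. \<delta> > 0 \<Longrightarrow> \<exists>M. \<forall>n\<ge>M. set_mesh_below (Sq n) t \<delta>"
proof -
  have "\<forall>n. \<exists>S. set_partition a t S \<and> set_mesh_below S t (inverse (real (Suc n)))"
    using fine_set_partition_exists[OF assms] by simp
  then obtain Sq where Sq: "\<And>n. set_partition a t (Sq n)" "\<And>n. set_mesh_below (Sq n) t (inverse (real (Suc n)))"
    by metis
  have "\<exists>M. \<forall>n\<ge>M. set_mesh_below (Sq n) t \<delta>" if \<delta>: "\<delta> > 0" for \<delta>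
  proof -
    obtain M where M: "M > 0" "inverse (real M) < \<delta>" using ex_inverse_of_nat_less[OF \<delta>] by blast
    have "inverse (real (Suc n)) \<le> \<delta>" if "n \<ge> M" for n
    proof -
      have "inverse (real (Suc n)) \<le> inverse (real M)" using that M(1) by (simp add: le_imp_inverse_le)
      then show ?thesis using M(2) by linarith
    qed
    then show ?thesis using Sq(2) set_mesh_below_mono by blast
  qed
  then show ?thesis by (rule that[OF Sq(1)])
qed

section \<open>The Riemann--Stieltjes integral\<close>

lemma part_sum_abs_nonneg: "0 \<le> part_sum (\<lambda>x x'. \<bar>g x' - g x\<bar>) t S"
  unfolding part_sum_def by (rule sum_nonneg) auto

lemma uniform_continuity_delta:
  fixes f :: "real \<Rightarrow> real" and a t \<eta> :: real
  assumes "continuous_on {a..t} f" "\<eta> > 0"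
  shows "\<exists>\<delta>>0. \<forall>x\<in>{a..t}. \<forall>y\<in>{a..t}. \<bar>x - y\<bar> < \<delta> \<longrightarrow> \<bar>f x - f y\<bar> \<le> (\<eta>::real)"
proof -
  have "uniformly_continuous_on {a..t} f"
    using compact_uniformly_continuous[OF assms(1) compact_Icc] .
  then obtain \<delta> where "\<delta> > 0" "\<forall>x\<in>{a..t}. \<forall>x'\<in>{a..t}. dist x' x < \<delta> \<longrightarrow> dist (f x') (f x) < \<eta>"
    unfolding uniformly_continuous_on_def using assms(2) by metis
  then show ?thesis unfolding dist_real_def by (metis less_imp_le)
qed

context
  fixes f g :: "real \<Rightarrow> real" and a t V :: real
  assumes at: "a \<le> t" and fc: "continuous_on {a..t} f"
    and V: "\<And>S. set_partition a t S \<Longrightarrow> part_sum (\<lambda>x x'. \<bar>g x' - g x\<bar>) t S \<le> V"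
begin

lemma variation_bound_nonneg: "0 \<le> V"
proof -
  have "set_partition a t {a, t}" using at unfolding set_partition_def by auto
  then show ?thesis using V part_sum_abs_nonneg[of g t "{a, t}"] by (meson order_trans)
qed

text \<open>Both sums are compared with the sum over the common refinement \<open>P \<union> Q\<close>.\<close>

lemma left_RS_sum_cauchy:
  assumes e: "\<epsilon> > 0"
  shows "\<exists>\<delta>>0. \<forall>P Q. set_partition a t P \<and> set_mesh_below P t \<delta> \<and> set_partition a t Q \<and> set_mesh_below Q t \<delta>
           \<longrightarrow> \<bar>left_RS_sum f g t P - left_RS_sum f g t Q\<bar> \<le> \<epsilon>"
proof -
  define \<eta> where "\<eta> = \<epsilon> / (2 * (V + 1))"
  have \<eta>: "\<eta> > 0" "2 * (\<eta> * V) \<le> \<epsilon>"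
    using e variation_bound_nonneg by (simp_all add: \<eta>_def field_simps)
  obtain \<delta> where \<delta>: "\<delta> > 0" and uc: "\<forall>x\<in>{a..t}. \<forall>y\<in>{a..t}. \<bar>x - y\<bar> < \<delta> \<longrightarrow> \<bar>f x - f y\<bar> \<le> \<eta>"
    using uniform_continuity_delta[OF fc \<eta>(1)] by blast
  have refine: "\<bar>left_RS_sum f g t (P \<union> Q) - left_RS_sum f g t P\<bar> \<le> \<eta> * V"
    if P: "set_partition a t P" "set_mesh_below P t \<delta>" and Q: "set_partition a t Q" for P Q
  proof -
    have U: "set_partition a t (P \<union> Q)" using set_partition_Un[OF P(1) Q] .
    have "\<bar>left_RS_sum f g t (P \<union> Q) - left_RS_sum f g t P\<bar> \<le> \<eta> * part_sum (\<lambda>x x'. \<bar>g x' - g x\<bar>) t (P \<union> Q)"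
      by (rule left_RS_sum_refine_bound[OF P(1) U _ P(2)]) (use uc in auto)
    also have "\<dots> \<le> \<eta> * V" using V[OF U] \<eta> by (simp add: mult_left_mono)
    finally show ?thesis .
  qed
  have "\<bar>left_RS_sum f g t P - left_RS_sum f g t Q\<bar> \<le> \<epsilon>"
    if "set_partition a t P" "set_mesh_below P t \<delta>" "set_partition a t Q" "set_mesh_below Q t \<delta>" for P Q
    using refine[of P Q] refine[of Q P] that \<eta>(2) by (simp add: Un_commute)
  then show ?thesis using \<delta> by blast
qed

lemma left_RS_sum_limit_exists:
  "\<exists>I. \<forall>\<epsilon>>0. \<exists>\<delta>>0. \<forall>S. set_partition a t S \<and> set_mesh_below S t \<delta> \<longrightarrow> \<bar>left_RS_sum f g t S - I\<bar> \<le> \<epsilon>"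
proof -
  obtain Sq :: "nat \<Rightarrow> real set" where Sq: "\<And>n. set_partition a t (Sq n)"
    and eventually_fine: "\<And>\<delta>. \<delta> > 0 \<Longrightarrow> \<exists>M. \<forall>n\<ge>M. set_mesh_below (Sq n) t \<delta>"
    using fine_set_partition_sequence[OF at] by metis
  define c where "c n = left_RS_sum f g t (Sq n)" for n
  have close: "\<exists>\<delta>>0. \<exists>M. \<forall>n\<ge>M. set_mesh_below (Sq n) t \<delta> \<and>
                 (\<forall>S. set_partition a t S \<and> set_mesh_below S t \<delta> \<longrightarrow> \<bar>left_RS_sum f g t S - c n\<bar> \<le> \<epsilon>)"
    if \<epsilon>: "\<epsilon> > 0" for \<epsilon>
  proof -
    obtain \<delta> where "\<delta> > 0" and \<delta>: "\<forall>P Q. set_partition a t P \<and> set_mesh_below P t \<delta> \<and> set_partition a t Q \<and> set_mesh_below Q t \<delta>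
           \<longrightarrow> \<bar>left_RS_sum f g t P - left_RS_sum f g t Q\<bar> \<le> \<epsilon>"
      using left_RS_sum_cauchy[OF \<epsilon>] by blast
    then show ?thesis using eventually_fine[OF \<open>\<delta> > 0\<close>] Sq unfolding c_def by blast
  qed
  have "Cauchy c"
  proof (rule CauchyI)
    fix e :: real assume "0 < e"
    then obtain \<delta> M where M: "\<forall>n\<ge>M. set_mesh_below (Sq n) t \<delta> \<and>
        (\<forall>S. set_partition a t S \<and> set_mesh_below S t \<delta> \<longrightarrow> \<bar>left_RS_sum f g t S - c n\<bar> \<le> e / 2)"
      using close[of "e / 2"] by auto
    then have "\<bar>c m - c n\<bar> \<le> e / 2" if "m \<ge> M" "n \<ge> M" for m n
      using that Sq unfolding c_def by blast
    then show "\<exists>M. \<forall>m\<ge>M. \<forall>n\<ge>M. norm (c m - c n) < e" using \<open>0 < e\<close> by force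
  qed
  then obtain I where I: "c \<longlonglongrightarrow> I" using Cauchy_convergent_iff convergent_def by blast
  have "\<exists>\<delta>>0. \<forall>S. set_partition a t S \<and> set_mesh_below S t \<delta> \<longrightarrow> \<bar>left_RS_sum f g t S - I\<bar> \<le> \<epsilon>"
    if "\<epsilon> > 0" for \<epsilon>
  proof -
    obtain \<delta> M where "\<delta> > 0" and M: "\<forall>n\<ge>M.
        \<forall>S. set_partition a t S \<and> set_mesh_below S t \<delta> \<longrightarrow> \<bar>left_RS_sum f g t S - c n\<bar> \<le> \<epsilon>"
      using close[OF \<open>\<epsilon> > 0\<close>] by blast
    have "\<bar>left_RS_sum f g t S - I\<bar> \<le> \<epsilon>" if "set_partition a t S" "set_mesh_below S t \<delta>" for S
    proof (rule LIMSEQ_le_const2)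
      show "(\<lambda>n. \<bar>left_RS_sum f g t S - c n\<bar>) \<longlonglongrightarrow> \<bar>left_RS_sum f g t S - I\<bar>"
        by (intro tendsto_intros I)
      show "\<exists>N. \<forall>n\<ge>N. \<bar>left_RS_sum f g t S - c n\<bar> \<le> \<epsilon>" using M that by blast
    qed
    then show ?thesis using \<open>\<delta> > 0\<close> by blast
  qed
  then show ?thesis by blast
qed

text \<open>Moving the tags of a tagged partition to left endpoints changes the sum by at most
  the oscillation of \<open>f\<close> times the variation of \<open>g\<close>.\<close>

lemma has_RS_integral_if_left_RS_limit:
  assumes I: "\<forall>\<epsilon>>0. \<exists>\<delta>>0. \<forall>S. set_partition a t S \<and> set_mesh_below S t \<delta> \<longrightarrow> \<bar>left_RS_sum f g t S - I\<bar> \<le> \<epsilon>"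
  shows "has_RS_integral f g a t I"
  unfolding has_RS_integral_def
proof (intro allI impI)
  fix \<epsilon> :: real assume e: "\<epsilon> > 0"
  obtain \<delta>1 where d1: "\<delta>1 > 0" and c1: "\<forall>S. set_partition a t S \<and> set_mesh_below S t \<delta>1 \<longrightarrow> \<bar>left_RS_sum f g t S - I\<bar> \<le> \<epsilon> / 2"
    using I e by (meson half_gt_zero)
  define \<eta> where "\<eta> = \<epsilon> / (4 * (V + 1))"
  have "\<eta> > 0" "4 * (\<eta> * V) \<le> \<epsilon>"
    using e variation_bound_nonneg by (simp_all add: \<eta>_def field_simps)
  then have \<eta>: "\<eta> > 0" "\<eta> * V < \<epsilon> / 2" using e by linarith+
  obtain \<delta>2 where d2: "\<delta>2 > 0" and uc: "\<forall>x\<in>{a..t}. \<forall>y\<in>{a..t}. \<bar>x - y\<bar> < \<delta>2 \<longrightarrow> \<bar>f x - f y\<bar> \<le> \<eta>"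
    using uniform_continuity_delta[OF fc \<eta>(1)] by blast
  have "\<bar>RS_sum f g xs ts - I\<bar> < \<epsilon>"
    if xs: "is_partition a t xs" "is_tagging xs ts" "mesh_below xs (min \<delta>1 \<delta>2)" for xs ts
  proof -
    have sp: "set_partition a t (set xs)" using set_partition_of_list(1)[OF xs(1)] .
    have "set_mesh_below (set xs) t \<delta>1"
      using set_partition_of_list(2)[OF xs(1) xs(3)] set_mesh_below_mono by (metis min.cobounded1)
    then have left: "\<bar>left_RS_sum f g t (set xs) - I\<bar> \<le> \<epsilon> / 2" using c1 sp by blast
    have lts: "length ts = length xs - 1" using xs(2) unfolding is_tagging_def by linarith
    have "\<bar>RS_sum f g xs ts - left_RS_sum f g t (set xs)\<bar> =
          \<bar>\<Sum>j<length ts. (f (ts ! j) - f (xs ! j)) * (g (xs ! Suc j) - g (xs ! j))\<bar>"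
      unfolding RS_sum_def left_RS_sum_def set_partition_of_list(3)[OF xs(1)] lts
      by (simp add: sum_subtractf[symmetric] algebra_simps)
    also have "\<dots> \<le> (\<Sum>j<length ts. \<eta> * \<bar>g (xs ! Suc j) - g (xs ! j)\<bar>)"
    proof (rule order_trans[OF sum_abs sum_mono])
      fix j assume j: "j \<in> {..<length ts}"
      have jl: "Suc j < length xs" using j lts by auto
      have r1: "xs ! j \<le> ts ! j" "ts ! j \<le> xs ! Suc j" using xs(2) j unfolding is_tagging_def by auto
      have r2: "a \<le> xs ! j" "xs ! Suc j \<le> t" using partition_nth_bounds[OF xs(1)] jl by auto
      have "xs ! Suc j - xs ! j < min \<delta>1 \<delta>2" using xs(3) jl unfolding mesh_below_def by auto
      then have "\<bar>f (ts ! j) - f (xs ! j)\<bar> \<le> \<eta>" using uc r1 r2 by auto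
      then show "\<bar>(f (ts ! j) - f (xs ! j)) * (g (xs ! Suc j) - g (xs ! j))\<bar> \<le> \<eta> * \<bar>g (xs ! Suc j) - g (xs ! j)\<bar>"
        unfolding abs_mult by (simp add: mult_right_mono)
    qed
    also have "\<dots> = \<eta> * part_sum (\<lambda>x x'. \<bar>g x' - g x\<bar>) t (set xs)"
      unfolding set_partition_of_list(3)[OF xs(1)] lts by (simp add: sum_distrib_left)
    also have "\<dots> \<le> \<eta> * V" using V[OF sp] \<eta> by (simp add: mult_left_mono)
    finally show ?thesis using left \<eta>(2) by linarith
  qed
  then show "\<exists>\<delta>>0. \<forall>xs ts. is_partition a t xs \<and> is_tagging xs ts \<and> mesh_below xs \<delta> \<longrightarrow>
      \<bar>RS_sum f g xs ts - I\<bar> < \<epsilon>"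
    using d1 d2 by (intro exI[of _ "min \<delta>1 \<delta>2"]) auto
qed

end

lemma has_RS_integral_unique:
  assumes at: "a \<le> t" and I: "has_RS_integral f g a t I" and J: "has_RS_integral f g a t J"
  shows "I = J"
proof (rule ccontr)
  assume "I \<noteq> J"
  then have e: "\<bar>I - J\<bar> / 2 > 0" by simp
  obtain d1 where d1: "d1 > 0" "\<forall>xs ts. is_partition a t xs \<and> is_tagging xs ts \<and> mesh_below xs d1 \<longrightarrow>
        \<bar>RS_sum f g xs ts - I\<bar> < \<bar>I - J\<bar> / 2" using I e unfolding has_RS_integral_def by blast
  obtain d2 where d2: "d2 > 0" "\<forall>xs ts. is_partition a t xs \<and> is_tagging xs ts \<and> mesh_below xs d2 \<longrightarrow>
        \<bar>RS_sum f g xs ts - J\<bar> < \<bar>I - J\<bar> / 2" using J e unfolding has_RS_integral_def by blast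
  obtain xs ts where xs: "is_partition a t xs" "is_tagging xs ts" "mesh_below xs (min d1 d2)"
    using fine_tagged_partition_exists[OF at, of "min d1 d2"] d1 d2 by auto
  have "mesh_below xs d1" "mesh_below xs d2" using xs(3) unfolding mesh_below_def by force+
  then have "\<bar>RS_sum f g xs ts - I\<bar> < \<bar>I - J\<bar> / 2" "\<bar>RS_sum f g xs ts - J\<bar> < \<bar>I - J\<bar> / 2"
    using d1 d2 xs by auto
  moreover have "\<bar>I - J\<bar> \<le> \<bar>RS_sum f g xs ts - J\<bar> + \<bar>RS_sum f g xs ts - I\<bar>"
    using abs_triangle_ineq4[of "RS_sum f g xs ts - J" "RS_sum f g xs ts - I"] by simp
  ultimately show False by (simp add: abs_if split: if_splits)
qed

lemma RS_integral_left_RS_limit: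
  fixes f g :: "real \<Rightarrow> real"
  assumes at: "a \<le> t" and fc: "continuous_on {a..t} f"
    and V: "\<And>S. set_partition a t S \<Longrightarrow> part_sum (\<lambda>x x'. \<bar>g x' - g x\<bar>) t S \<le> V"
  shows "\<forall>\<epsilon>>0. \<exists>\<delta>>0. \<forall>S. set_partition a t S \<and> set_mesh_below S t \<delta> \<longrightarrow> \<bar>left_RS_sum f g t S - RS_integral f g a t\<bar> \<le> \<epsilon>"
proof -
  obtain I where I: "\<forall>\<epsilon>>0. \<exists>\<delta>>0. \<forall>S. set_partition a t S \<and> set_mesh_below S t \<delta> \<longrightarrow> \<bar>left_RS_sum f g t S - I\<bar> \<le> \<epsilon>"
    using left_RS_sum_limit_exists[OF at fc V] by blast
  have "RS_integral f g a t = I" unfolding RS_integral_def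
    using has_RS_integral_if_left_RS_limit[OF at fc V I] has_RS_integral_unique[OF at] by blast
  then show ?thesis using I by simp
qed

lemma left_RS_sum_short_interval:
  assumes P: "set_partition s t P" and short: "t - s < \<delta>"
    and uc: "\<And>x y. x \<in> {s..t} \<Longrightarrow> y \<in> {s..t} \<Longrightarrow> \<bar>x - y\<bar> < \<delta> \<Longrightarrow> \<bar>f x - f y\<bar> \<le> \<eta>"
  shows "\<bar>left_RS_sum f g t P - f s * (g t - g s)\<bar> \<le> \<eta> * part_sum (\<lambda>x x'. \<bar>g x' - g x\<bar>) t P"
proof -
  have st: "s \<le> t" using set_partition_le[OF P] .
  have Q: "set_partition s t {s, t}" using st unfolding set_partition_def by auto
  have "set_mesh_below {s, t} t \<delta>"
  proof (cases "s = t")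
    case False
    then have "next_pt {s, t} s = t" by (intro next_pt_eqI) (use st in auto)
    then show ?thesis unfolding set_mesh_below_def using short by auto
  qed (simp add: set_mesh_below_def)
  moreover have "{s, t} \<subseteq> P" using P unfolding set_partition_def by auto
  ultimately have "\<bar>left_RS_sum f g t P - left_RS_sum f g t {s, t}\<bar> \<le> \<eta> * part_sum (\<lambda>x x'. \<bar>g x' - g x\<bar>) t P"
    using left_RS_sum_refine_bound[OF Q P, of \<delta> f \<eta> g] uc by blast
  moreover have "left_RS_sum f g t {s, t} = f s * (g t - g s)"
    unfolding left_RS_sum_def part_sum_two_points[OF st] by simp
  ultimately show ?thesis by simp
qed

lemma RS_integral_increment_bound:
  fixes f g :: "real \<Rightarrow> real"
  assumes fc: "continuous_on {a..b} f"
    and V: "\<And>s t S. a \<le> s \<Longrightarrow> s \<le> t \<Longrightarrow> t \<le> b \<Longrightarrow> set_partition s t S \<Longrightarrow> part_sum (\<lambda>x x'. \<bar>g x' - g x\<bar>) t S \<le> V"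
    and st: "a \<le> s" "s \<le> t" "t \<le> b" "t - s < \<delta>"
    and uc: "\<forall>x\<in>{a..b}. \<forall>y\<in>{a..b}. \<bar>x - y\<bar> < \<delta> \<longrightarrow> \<bar>f x - f y\<bar> \<le> \<eta>"
    and \<eta>: "\<eta> \<ge> 0"
  shows "\<bar>RS_integral f g a t - RS_integral f g a s\<bar> \<le> \<bar>f s\<bar> * \<bar>g t - g s\<bar> + \<eta> * V"
proof (rule field_le_epsilon)
  fix e :: real assume e: "e > 0"
  have approx: "\<exists>d>0. \<forall>S. set_partition a u S \<and> set_mesh_below S u d \<longrightarrow>
                  \<bar>left_RS_sum f g u S - RS_integral f g a u\<bar> \<le> e / 2" if "a \<le> u" "u \<le> b" for u
  proof -
    have "continuous_on {a..u} f" by (rule continuous_on_subset[OF fc]) (use that in auto)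
    moreover have "\<And>S. set_partition a u S \<Longrightarrow> part_sum (\<lambda>x x'. \<bar>g x' - g x\<bar>) u S \<le> V"
      using V that by auto
    ultimately have "\<forall>\<epsilon>>0. \<exists>\<delta>>0. \<forall>S. set_partition a u S \<and> set_mesh_below S u \<delta> \<longrightarrow>
        \<bar>left_RS_sum f g u S - RS_integral f g a u\<bar> \<le> \<epsilon>"
      by (rule RS_integral_left_RS_limit[OF that(1)])
    then show ?thesis using half_gt_zero[OF e] by blast
  qed
  obtain d1 where "d1 > 0" and d1: "\<forall>S. set_partition a s S \<and> set_mesh_below S s d1 \<longrightarrow>
      \<bar>left_RS_sum f g s S - RS_integral f g a s\<bar> \<le> e / 2" using approx[of s] st by auto
  obtain d2 where "d2 > 0" and d2: "\<forall>S. set_partition a t S \<and> set_mesh_below S t d2 \<longrightarrow>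
      \<bar>left_RS_sum f g t S - RS_integral f g a t\<bar> \<le> e / 2" using approx[of t] st by auto
  have d: "0 < min d1 d2" using \<open>d1 > 0\<close> \<open>d2 > 0\<close> by simp
  obtain P1 where P1: "set_partition a s P1" "set_mesh_below P1 s (min d1 d2)"
    using fine_set_partition_exists[OF st(1) d] by blast
  obtain P2 where P2: "set_partition s t P2" "set_mesh_below P2 t (min d1 d2)"
    using fine_set_partition_exists[OF st(2) d] by blast
  note U = set_partition_concat[OF P1(1) P2(1)]
  have "set_mesh_below P1 s d1" by (rule set_mesh_below_mono[OF P1(2)]) simp
  moreover have "set_mesh_below (P1 \<union> P2) t d2"
    by (rule set_mesh_below_mono[OF U(3)[OF P1(2) P2(2)]]) simp
  ultimately have "\<bar>left_RS_sum f g s P1 - RS_integral f g a s\<bar> \<le> e / 2"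
    and "\<bar>left_RS_sum f g t (P1 \<union> P2) - RS_integral f g a t\<bar> \<le> e / 2"
    using d1 d2 P1(1) U(1) by blast+
  moreover have "left_RS_sum f g t (P1 \<union> P2) = left_RS_sum f g s P1 + left_RS_sum f g t P2"
    unfolding left_RS_sum_def using U(2) .
  moreover have "\<bar>left_RS_sum f g t P2 - f s * (g t - g s)\<bar> \<le> \<eta> * V"
  proof -
    have "\<bar>left_RS_sum f g t P2 - f s * (g t - g s)\<bar> \<le> \<eta> * part_sum (\<lambda>x x'. \<bar>g x' - g x\<bar>) t P2"
      by (rule left_RS_sum_short_interval[OF P2(1) st(4)]) (use uc st in auto)
    also have "\<dots> \<le> \<eta> * V" using V[OF st(1-3) P2(1)] \<eta> by (simp add: mult_left_mono)
    finally show ?thesis .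
  qed
  ultimately show "\<bar>RS_integral f g a t - RS_integral f g a s\<bar> \<le> \<bar>f s\<bar> * \<bar>g t - g s\<bar> + \<eta> * V + e"
    using abs_ge_self[of "f s * (g t - g s)"] abs_ge_minus_self[of "f s * (g t - g s)"]
    by (simp only: abs_le_iff abs_mult) linarith
qed

lemma RS_integral_dist_bound:
  fixes f g :: "real \<Rightarrow> real"
  assumes fc: "continuous_on {a..b} f"
    and V: "\<And>s t S. a \<le> s \<Longrightarrow> s \<le> t \<Longrightarrow> t \<le> b \<Longrightarrow> set_partition s t S \<Longrightarrow> part_sum (\<lambda>x x'. \<bar>g x' - g x\<bar>) t S \<le> V"
    and uc: "\<forall>x\<in>{a..b}. \<forall>y\<in>{a..b}. \<bar>x - y\<bar> < \<delta> \<longrightarrow> \<bar>f x - f y\<bar> \<le> \<eta>" and "\<eta> \<ge> 0"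
    and M: "\<forall>z\<in>{a..b}. \<bar>f z\<bar> \<le> M"
    and xy: "x \<in> {a..b}" "y \<in> {a..b}" "\<bar>y - x\<bar> < \<delta>"
  shows "\<bar>RS_integral f g a y - RS_integral f g a x\<bar> \<le> M * \<bar>g y - g x\<bar> + \<eta> * V"
proof (cases "x \<le> y")
  case True
  then have "\<bar>RS_integral f g a y - RS_integral f g a x\<bar> \<le> \<bar>f x\<bar> * \<bar>g y - g x\<bar> + \<eta> * V"
    using xy assms(4) by (intro RS_integral_increment_bound[OF fc V _ _ _ _ uc]) auto
  moreover have "\<bar>f x\<bar> * \<bar>g y - g x\<bar> \<le> M * \<bar>g y - g x\<bar>"
    using M xy by (intro mult_right_mono) auto
  ultimately show ?thesis by linarith
next
  case False
  then have "\<bar>RS_integral f g a x - RS_integral f g a y\<bar> \<le> \<bar>f y\<bar> * \<bar>g x - g y\<bar> + \<eta> * V"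
    using xy assms(4) by (intro RS_integral_increment_bound[OF fc V _ _ _ _ uc]) auto
  moreover have "\<bar>f y\<bar> * \<bar>g x - g y\<bar> \<le> M * \<bar>g y - g x\<bar>"
    using M xy by (simp add: abs_minus_commute mult_right_mono)
  ultimately show ?thesis by (simp add: abs_minus_commute)
qed

lemma continuous_on_RS_integral:
  fixes f g :: "real \<Rightarrow> real"
  assumes ab: "a \<le> b" and fc: "continuous_on {a..b} f" and gc: "continuous_on {a..b} g"
    and V: "\<And>s t S. a \<le> s \<Longrightarrow> s \<le> t \<Longrightarrow> t \<le> b \<Longrightarrow> set_partition s t S \<Longrightarrow> part_sum (\<lambda>x x'. \<bar>g x' - g x\<bar>) t S \<le> V"
  shows "continuous_on {a..b} (\<lambda>t. RS_integral f g a t)"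
  unfolding continuous_on_iff
proof (intro ballI allI impI)
  fix x e :: real assume x: "x \<in> {a..b}" and e: "e > 0"
  have "set_partition a a {a}" unfolding set_partition_def by auto
  then have V0: "0 \<le> V" using V[of a a "{a}"] ab part_sum_abs_nonneg[of g a "{a}"] by linarith
  obtain M where M: "\<forall>y\<in>{a..b}. \<bar>f y\<bar> \<le> M"
    using compact_imp_bounded[OF compact_continuous_image[OF fc compact_Icc]] unfolding bounded_iff by auto
  then have M0: "0 \<le> M" using ab by force
  define \<eta> where "\<eta> = e / (2 * (V + 1))"
  have \<eta>: "\<eta> > 0" "\<eta> * V < e / 2" using e V0 by (simp_all add: \<eta>_def field_simps)
  obtain d1 where "d1 > 0" and d1: "\<forall>x\<in>{a..b}. \<forall>y\<in>{a..b}. \<bar>x - y\<bar> < d1 \<longrightarrow> \<bar>f x - f y\<bar> \<le> \<eta>"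
    using uniform_continuity_delta[OF fc \<eta>(1)] by blast
  have "e / (2 * (M + 1)) > 0" using e M0 by simp
  then obtain d2 where "d2 > 0" and d2: "\<forall>y\<in>{a..b}. dist y x < d2 \<longrightarrow> \<bar>g y - g x\<bar> < e / (2 * (M + 1))"
    using gc x unfolding continuous_on_iff dist_real_def by blast
  have "\<bar>RS_integral f g a y - RS_integral f g a x\<bar> < e" if y: "y \<in> {a..b}" "\<bar>y - x\<bar> < min d1 d2" for y
  proof -
    have "M * \<bar>g y - g x\<bar> \<le> M * (e / (2 * (M + 1)))"
      using d2 y M0 by (intro mult_left_mono) (auto simp: dist_real_def)
    also have "\<dots> < e / 2" using M0 e by (simp add: field_simps)
    finally have "M * \<bar>g y - g x\<bar> < e / 2" .
    moreover have "\<bar>y - x\<bar> < d1" using y(2) by simp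
    then have "\<bar>RS_integral f g a y - RS_integral f g a x\<bar> \<le> M * \<bar>g y - g x\<bar> + \<eta> * V"
      using RS_integral_dist_bound[OF fc V d1 less_imp_le[OF \<eta>(1)] M x y(1)] by simp
    ultimately show ?thesis using \<eta>(2) by linarith
  qed
  then show "\<exists>d>0. \<forall>y\<in>{a..b}. dist y x < d \<longrightarrow> dist (RS_integral f g a y) (RS_integral f g a x) < e"
    using \<open>d1 > 0\<close> \<open>d2 > 0\<close> by (intro exI[of _ "min d1 d2"]) (auto simp: dist_real_def)
qed

section \<open>Norm bound for the signature\<close>

lemma power_div_fact_increment_le:
  fixes u v :: real
  assumes "0 \<le> u" "u \<le> v"
  shows "(v - u) * (u ^ k / fact k) \<le> (v ^ Suc k - u ^ Suc k) / fact (Suc k)"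
proof -
  have "(\<Sum>i<Suc k. u ^ k) \<le> (\<Sum>i<Suc k. u ^ (Suc k - Suc i) * v ^ i)"
  proof (rule sum_mono)
    fix i assume i: "i \<in> {..<Suc k}"
    have "u ^ k = u ^ (Suc k - Suc i) * u ^ i" using i by (simp add: power_add[symmetric])
    also have "\<dots> \<le> u ^ (Suc k - Suc i) * v ^ i"
      using assms by (intro mult_left_mono power_mono) auto
    finally show "u ^ k \<le> u ^ (Suc k - Suc i) * v ^ i" .
  qed
  then have "(v - u) * (real (Suc k) * u ^ k) \<le> v ^ Suc k - u ^ Suc k"
    using assms power_diff_sumr2[of v "Suc k" u] by (simp add: mult_left_mono)
  then have "(v - u) * (real (Suc k) * u ^ k) / fact (Suc k) \<le> (v ^ Suc k - u ^ Suc k) / fact (Suc k)"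
    by (rule divide_right_mono) simp
  moreover have "(v - u) * (u ^ k / fact k) = (v - u) * (real (Suc k) * u ^ k) / fact (Suc k)"
    by (simp add: fact_Suc del: of_nat_Suc)
  ultimately show ?thesis by simp
qed

lemma L2_set_sum_le:
  assumes "finite X"
  shows "L2_set (\<lambda>e. \<Sum>x\<in>X. h x e) E \<le> (\<Sum>x\<in>X. L2_set (h x) E)"
  using assms
proof (induction X rule: finite_induct)
  case (insert y X)
  have "L2_set (\<lambda>e. \<Sum>x\<in>insert y X. h x e) E = L2_set (\<lambda>e. h y e + (\<Sum>x\<in>X. h x e)) E"
    using insert by simp
  also have "\<dots> \<le> L2_set (h y) E + L2_set (\<lambda>e. \<Sum>x\<in>X. h x e) E"
    by (rule L2_set_triangle_ineq)
  also have "\<dots> \<le> L2_set (h y) E + (\<Sum>x\<in>X. L2_set (h x) E)" using insert by simp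
  finally show ?case using insert by simp
qed (simp add: L2_set_0')

lemma L2_set_times:
  "L2_set (\<lambda>(i, w). u i * v w) (A \<times> B) = L2_set u A * L2_set v B"
proof -
  have "(\<Sum>(i, w)\<in>A \<times> B. (u i * v w)\<^sup>2) = (\<Sum>i\<in>A. (u i)\<^sup>2) * (\<Sum>w\<in>B. (v w)\<^sup>2)"
    by (simp add: sum_product sum.cartesian_product power_mult_distrib case_prod_beta)
  then show ?thesis unfolding L2_set_def by (simp add: real_sqrt_mult case_prod_beta)
qed

lemma norm_eq_L2_set_Basis: "norm (v::'a::euclidean_space) = L2_set (\<lambda>i. v \<bullet> i) Basis"
  unfolding norm_eq_sqrt_inner L2_set_def
  by (subst euclidean_inner) (simp add: power2_eq_square)

lemma L2_set_le_card_bound: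
  assumes "\<And>e. e \<in> E \<Longrightarrow> \<bar>f e\<bar> \<le> \<epsilon>"
  shows "L2_set f E \<le> sqrt (real (card E)) * \<epsilon>"
proof (cases "E = {}")
  case False
  then obtain e where "e \<in> E" by blast
  then have "0 \<le> \<epsilon>" using assms[of e] by linarith
  have "L2_set f E = L2_set (\<lambda>e. \<bar>f e\<bar>) E" by (simp add: L2_set_def)
  also have "\<dots> \<le> L2_set (\<lambda>e. \<epsilon>) E" by (rule L2_set_mono) (use assms in auto)
  also have "\<dots> = sqrt (real (card E)) * \<epsilon>" using \<open>0 \<le> \<epsilon>\<close> by (simp add: L2_set_constant)
  finally show ?thesis .
qed simp

lemma L2_set_le_of_approx:
  assumes "\<And>\<epsilon>. 0 < \<epsilon> \<Longrightarrow> \<exists>Y. (\<forall>e\<in>E. \<bar>X e - Y e\<bar> \<le> \<epsilon>) \<and> L2_set Y E \<le> B"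
  shows "L2_set X E \<le> B"
proof (rule field_le_epsilon)
  fix d :: real
  assume d: "0 < d"
  define \<epsilon> where "\<epsilon> = d / (sqrt (real (card E)) + 1)"
  have "0 < sqrt (real (card E)) + 1" by (simp add: add_nonneg_pos)
  then have \<epsilon>: "0 < \<epsilon>" "sqrt (real (card E)) * \<epsilon> \<le> d"
    using d by (simp_all add: \<epsilon>_def field_simps)
  obtain Y where Y: "\<forall>e\<in>E. \<bar>X e - Y e\<bar> \<le> \<epsilon>" "L2_set Y E \<le> B" using assms[OF \<epsilon>(1)] by blast
  have "L2_set X E \<le> L2_set Y E + L2_set (\<lambda>e. X e - Y e) E"
    using L2_set_triangle_ineq[of Y "\<lambda>e. X e - Y e" E] by simp
  also have "L2_set (\<lambda>e. X e - Y e) E \<le> sqrt (real (card E)) * \<epsilon>"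
    by (rule L2_set_le_card_bound) (use Y in auto)
  finally show "L2_set X E \<le> B + d" using Y(2) \<epsilon>(2) by linarith
qed

lemma finite_common_delta:
  assumes "finite E" "\<And>e. e \<in> E \<Longrightarrow> \<exists>\<delta>>0. Q e \<delta>"
    and mono: "\<And>e \<delta> \<delta>'. Q e \<delta> \<Longrightarrow> 0 < \<delta>' \<Longrightarrow> \<delta>' \<le> \<delta> \<Longrightarrow> Q e \<delta>'"
  shows "\<exists>\<delta>>0. \<forall>e\<in>E. Q e (\<delta>::real)"
  using assms(1,2)
proof (induction E rule: finite_induct)
  case (insert y E)
  obtain d1 where d1: "d1 > 0" "\<forall>e\<in>E. Q e d1" using insert by auto
  obtain d2 where d2: "d2 > 0" "Q y d2" using insert by auto
  have "\<forall>e\<in>insert y E. Q e (min d1 d2)"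
    using d1 d2 mono[of _ d1 "min d1 d2"] mono[of y d2 "min d1 d2"] by auto
  then show ?case using d1 d2 by (intro exI[of _ "min d1 d2"]) auto
qed (intro exI[of _ 1], auto)

lemma words_0: "words 0 = {[]}"
  unfolding words_def by auto

lemma words_Suc: "words (Suc k) = (\<lambda>(i, w). i # w) ` (Basis \<times> words k)"
  unfolding words_def by (auto simp: length_Suc_conv image_iff)

lemma finite_words: "finite (words k :: 'a::euclidean_space list set)"
  unfolding words_def using finite_lists_length_eq[OF finite_Basis] by (simp add: conj_commute)

lemma L2_set_words_Suc:
  "L2_set h (words (Suc k)) = L2_set (\<lambda>(i, w). h (i # w)) (Basis \<times> words k)"
proof -
  have inj: "inj_on (\<lambda>(i, w). i # w) (Basis \<times> words k)" by (auto simp: inj_on_def)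
  show ?thesis unfolding L2_set_def words_Suc sum.reindex[OF inj] by (simp add: case_prod_beta comp_def)
qed

lemma rev_words: "rev ` words k = words k"
proof (intro equalityI subsetI)
  show "w \<in> rev ` words k" if "w \<in> words k" for w
    by (rule image_eqI[of _ _ "rev w"]) (use that in \<open>auto simp: words_def\<close>)
qed (auto simp: words_def)

context
  fixes p :: "real \<Rightarrow> 'a::euclidean_space" and a b :: real
  assumes ab: "a \<le> b" and pc: "continuous_on {a..b} p" and bv: "bounded_variation_on p a b"
begin

lemma component_variation_le:
  assumes "a \<le> s" "s \<le> t" "t \<le> b" "set_partition s t S" "i \<in> Basis"
  shows "part_sum (\<lambda>x x'. \<bar>p x' \<bullet> i - p x \<bullet> i\<bar>) t S \<le> path_length p a b"
proof -
  have "part_sum (\<lambda>x x'. \<bar>p x' \<bullet> i - p x \<bullet> i\<bar>) t S \<le> part_sum (\<lambda>x x'. path_length p a x' - path_length p a x) t S"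
  proof (rule part_sum_mono)
    fix x assume x: "x \<in> S - {t}"
    have n: "next_pt S x \<in> S" "x < next_pt S x" using next_pt_props[OF assms(4) x] by auto
    have r: "s \<le> x" "next_pt S x \<le> t" using assms(4) x n unfolding set_partition_def by auto
    have "\<bar>p (next_pt S x) \<bullet> i - p x \<bullet> i\<bar> = \<bar>(p (next_pt S x) - p x) \<bullet> i\<bar>" by (simp add: inner_diff_left)
    also have "\<dots> \<le> norm (p (next_pt S x) - p x)" by (rule Basis_le_norm[OF assms(5)])
    also have "\<dots> \<le> path_length p a (next_pt S x) - path_length p a x"
      using path_length_add_norm_le[OF bv, of x "next_pt S x"] assms r n by linarith
    finally show "\<bar>p (next_pt S x) \<bullet> i - p x \<bullet> i\<bar> \<le> path_length p a (next_pt S x) - path_length p a x" .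
  qed
  also have "\<dots> = path_length p a t - path_length p a s" by (rule part_sum_telescope[OF assms(4)])
  also have "\<dots> \<le> path_length p a b"
    using path_length_nonneg[OF bv, of s] path_length_mono[OF bv, of t b] assms by linarith
  finally show ?thesis .
qed

lemma continuous_on_sig_rev: "set w \<subseteq> Basis \<Longrightarrow> continuous_on {a..b} (sig_rev p a w)"
proof (induction w)
  case Nil
  have "sig_rev p a [] = (\<lambda>_. 1)" by (rule ext) simp
  then show ?case by (simp add: continuous_on_const)
next
  case (Cons i w)
  have "sig_rev p a (i # w) = (\<lambda>t. RS_integral (sig_rev p a w) (\<lambda>u. p u \<bullet> i) a t)" by (rule ext) simp
  moreover have "continuous_on {a..b} (\<lambda>u. p u \<bullet> i)" by (intro continuous_intros pc)
  ultimately show ?case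
    using Cons by (auto intro!: continuous_on_RS_integral[OF ab] component_variation_le)
qed

lemma sig_rev_left_RS_limit:
  assumes "set w \<subseteq> Basis" "i \<in> Basis" "a \<le> t" "t \<le> b"
  shows "\<forall>\<epsilon>>0. \<exists>\<delta>>0. \<forall>S. set_partition a t S \<and> set_mesh_below S t \<delta> \<longrightarrow>
           \<bar>left_RS_sum (sig_rev p a w) (\<lambda>u. p u \<bullet> i) t S - sig_rev p a (i # w) t\<bar> \<le> \<epsilon>"
proof -
  have f: "continuous_on {a..t} (sig_rev p a w)"
    by (rule continuous_on_subset[OF continuous_on_sig_rev[OF assms(1)]]) (use assms in auto)
  have V: "\<And>S. set_partition a t S \<Longrightarrow> part_sum (\<lambda>x x'. \<bar>p x' \<bullet> i - p x \<bullet> i\<bar>) t S \<le> path_length p a b"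
    using component_variation_le[of a t] assms by auto
  show ?thesis using RS_integral_left_RS_limit[OF assms(3) f V] by simp
qed

lemma L2_set_left_RS_sum_sig_rev_le:
  assumes t: "t \<le> b" and S: "set_partition a t S"
    and IH: "\<And>x. x \<in> {a..b} \<Longrightarrow> L2_set (\<lambda>w. sig_rev p a w x) (words k) \<le> path_length p a x ^ k / fact k"
  shows "L2_set (\<lambda>(i, w). left_RS_sum (sig_rev p a w) (\<lambda>u. p u \<bullet> i) t S) (Basis \<times> words k)
           \<le> path_length p a t ^ Suc k / fact (Suc k)"
proof -
  define G where "G y = path_length p a y ^ Suc k / fact (Suc k)" for y
  define h where "h x = (\<lambda>(i, w). ((p (next_pt S x) - p x) \<bullet> i) * sig_rev p a w x)" for x
  have "L2_set (\<lambda>(i, w). left_RS_sum (sig_rev p a w) (\<lambda>u. p u \<bullet> i) t S) (Basis \<times> words k)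
        = L2_set (\<lambda>e. \<Sum>x\<in>S - {t}. h x e) (Basis \<times> words k)"
    unfolding left_RS_sum_def part_sum_def h_def
    by (intro L2_set_cong) (auto simp: inner_diff_left mult.commute intro: sum.cong)
  also have "\<dots> \<le> (\<Sum>x\<in>S - {t}. L2_set (h x) (Basis \<times> words k))"
    by (rule L2_set_sum_le) (use S in \<open>simp add: set_partition_def\<close>)
  also have "\<dots> \<le> (\<Sum>x\<in>S - {t}. G (next_pt S x) - G x)"
  proof (rule sum_mono)
    fix x assume x: "x \<in> S - {t}"
    have n: "x < next_pt S x" "next_pt S x \<le> t" "a \<le> x"
      using next_pt_props[OF S x] S x unfolding set_partition_def by auto
    have "L2_set (h x) (Basis \<times> words k)
          = norm (p (next_pt S x) - p x) * L2_set (\<lambda>w. sig_rev p a w x) (words k)"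
      unfolding h_def by (simp add: L2_set_times norm_eq_L2_set_Basis)
    also have "\<dots> \<le> (path_length p a (next_pt S x) - path_length p a x) * (path_length p a x ^ k / fact k)"
    proof (rule mult_mono)
      show "norm (p (next_pt S x) - p x) \<le> path_length p a (next_pt S x) - path_length p a x"
        using path_length_add_norm_le[OF bv, of x "next_pt S x"] n t by auto
      show "L2_set (\<lambda>w. sig_rev p a w x) (words k) \<le> path_length p a x ^ k / fact k"
        using IH n t by auto
      show "0 \<le> path_length p a (next_pt S x) - path_length p a x"
        using path_length_mono[OF bv, of x "next_pt S x"] n t by auto
    qed simp
    also have "\<dots> \<le> G (next_pt S x) - G x"
      unfolding G_def diff_divide_distrib[symmetric] using n t
      by (intro power_div_fact_increment_le path_length_nonneg[OF bv] path_length_mono[OF bv]) auto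
    finally show "L2_set (h x) (Basis \<times> words k) \<le> G (next_pt S x) - G x" .
  qed
  also have "\<dots> = G t - G a" using part_sum_telescope[OF S, of G] unfolding part_sum_def .
  also have "\<dots> = path_length p a t ^ Suc k / fact (Suc k)"
    unfolding G_def using path_length_start[OF bv] by simp
  finally show ?thesis .
qed

lemma L2_set_sig_rev_le:
  assumes "t \<in> {a..b}"
  shows "L2_set (\<lambda>w. sig_rev p a w t) (words k) \<le> path_length p a t ^ k / fact k"
  using assms
proof (induction k arbitrary: t)
  case 0
  then show ?case by (simp add: words_0 L2_set_def)
next
  case (Suc k)
  define E where "E = (Basis :: 'a set) \<times> (words k :: 'a list set)"
  have "L2_set (\<lambda>(i, w). sig_rev p a (i # w) t) E \<le> path_length p a t ^ Suc k / fact (Suc k)"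
  proof (rule L2_set_le_of_approx)
    fix \<epsilon> :: real
    assume \<epsilon>: "0 < \<epsilon>"
    define Q where "Q e \<delta> \<longleftrightarrow> (\<forall>S. set_partition a t S \<and> set_mesh_below S t \<delta> \<longrightarrow>
        \<bar>left_RS_sum (sig_rev p a (snd e)) (\<lambda>u. p u \<bullet> fst e) t S - sig_rev p a (fst e # snd e) t\<bar> \<le> \<epsilon>)"
      for e :: "'a \<times> 'a list" and \<delta>
    have "\<exists>\<delta>>0. \<forall>e\<in>E. Q e \<delta>"
    proof (rule finite_common_delta)
      show "finite E" unfolding E_def by (intro finite_cartesian_product finite_Basis finite_words)
      show "\<exists>\<delta>>0. Q e \<delta>" if "e \<in> E" for e
        using that sig_rev_left_RS_limit[of "snd e" "fst e" t] Suc.prems \<epsilon>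
        unfolding Q_def E_def words_def by auto
      show "Q e \<delta>'" if "Q e \<delta>" "0 < \<delta>'" "\<delta>' \<le> \<delta>" for e \<delta> \<delta>'
        using that set_mesh_below_mono unfolding Q_def by blast
    qed
    then obtain \<delta> where "0 < \<delta>" "\<forall>e\<in>E. Q e \<delta>" by blast
    moreover obtain S where S: "set_partition a t S" "set_mesh_below S t \<delta>"
      using fine_set_partition_exists[of a t \<delta>] Suc.prems \<open>0 < \<delta>\<close> by auto
    ultimately show "\<exists>Y. (\<forall>e\<in>E. \<bar>(\<lambda>(i, w). sig_rev p a (i # w) t) e - Y e\<bar> \<le> \<epsilon>)
                       \<and> L2_set Y E \<le> path_length p a t ^ Suc k / fact (Suc k)"
      using L2_set_left_RS_sum_sig_rev_le[of t S k] Suc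
      by (intro exI[of _ "\<lambda>(i, w). left_RS_sum (sig_rev p a w) (\<lambda>u. p u \<bullet> i) t S"])
        (auto simp: Q_def E_def abs_minus_commute)
  qed
  then show ?case unfolding L2_set_words_Suc E_def .
qed

end

lemma sig_inner_eq_sum_sig_rev:
  "sig_inner \<gamma> \<sigma> a k s t = (\<Sum>w\<in>words k. sig_rev \<gamma> a w s * sig_rev \<sigma> a w t)"
proof -
  have "inj_on rev (words k)" by (simp add: inj_on_def)
  then have "(\<Sum>w\<in>words k. sig_rev \<gamma> a w s * sig_rev \<sigma> a w t)
             = (\<Sum>w\<in>words k. sig_rev \<gamma> a (rev w) s * sig_rev \<sigma> a (rev w) t)"
    using sum.reindex[of rev "words k" "\<lambda>w. sig_rev \<gamma> a w s * sig_rev \<sigma> a w t"] by (simp add: rev_words)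
  then show ?thesis unfolding sig_inner_def sig_coord_def by simp
qed

lemma sig_inner_bound:
  fixes \<gamma> \<sigma> :: "real \<Rightarrow> 'a::euclidean_space"
  assumes "a \<le> b"
    and "continuous_on {a..b} \<gamma>" and "continuous_on {a..b} \<sigma>"
    and "bounded_variation_on \<gamma> a b" and "bounded_variation_on \<sigma> a b"
    and s: "s \<in> {a..b}" and t: "t \<in> {a..b}"
  shows "\<bar>sig_inner \<gamma> \<sigma> a k s t\<bar> \<le> (path_length \<gamma> a s * path_length \<sigma> a t) ^ k / (fact k)\<^sup>2"
proof -
  have "\<bar>sig_inner \<gamma> \<sigma> a k s t\<bar> \<le> (\<Sum>w\<in>words k. \<bar>sig_rev \<gamma> a w s\<bar> * \<bar>sig_rev \<sigma> a w t\<bar>)"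
    unfolding sig_inner_eq_sum_sig_rev abs_mult[symmetric] by (rule sum_abs)
  also have "\<dots> \<le> L2_set (\<lambda>w. sig_rev \<gamma> a w s) (words k) * L2_set (\<lambda>w. sig_rev \<sigma> a w t) (words k)"
    by (rule L2_set_mult_ineq)
  also have "\<dots> \<le> (path_length \<gamma> a s ^ k / fact k) * (path_length \<sigma> a t ^ k / fact k)"
    using L2_set_sig_rev_le[OF assms(1,2,4) s] L2_set_sig_rev_le[OF assms(1,3,5) t] s t
    by (intro mult_mono) (auto simp: path_length_nonneg[OF assms(4)])
  also have "\<dots> = (path_length \<gamma> a s * path_length \<sigma> a t) ^ k / (fact k)\<^sup>2"
    by (simp add: power_mult_distrib power2_eq_square)
  finally show ?thesis .
qed

section \<open>A Stirling-type bound for \<open>\<Gamma>(k/2+1)/k!\<close>\<close>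

lemma ln_one_plus_le_cubic:
  fixes x :: real
  assumes x: "0 \<le> x"
  shows "ln (1 + x) \<le> x - x^2/2 + x^3/3"
proof -
  define \<phi> where "\<phi> y = y - y^2/2 + y^3/3 - ln (1 + y)" for y :: real
  have "\<phi> 0 \<le> \<phi> x"
  proof (rule DERIV_nonneg_imp_nondecreasing[OF x])
    fix y :: real assume y: "0 \<le> y" "y \<le> x"
    have d: "(\<phi> has_real_derivative (1 - y + y^2 - 1 / (1 + y))) (at y)"
      unfolding \<phi>_def using y
      by (auto intro!: derivative_eq_intros simp: power2_eq_square field_simps)
    have "1 - y + y^2 - 1 / (1 + y) = y^3 / (1 + y)"
      using y by (simp add: field_simps power2_eq_square power3_eq_cube)
    also have "\<dots> \<ge> 0" using y by simp
    finally show "\<exists>d. (\<phi> has_real_derivative d) (at y) \<and> 0 \<le> d" using d by blast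
  qed
  then show ?thesis by (simp add: \<phi>_def)
qed

lemma one_plus_le_exp_cubic:
  fixes x :: real
  assumes "0 \<le> x"
  shows "1 + x \<le> exp (x - x^2/2 + x^3/3)"
proof -
  have "1 + x = exp (ln (1 + x))" using assms by simp
  also have "\<dots> \<le> exp (x - x^2/2 + x^3/3)" using ln_one_plus_le_cubic[OF assms] by simp
  finally show ?thesis .
qed

lemma Gamma_plus1_pos: "0 < x \<Longrightarrow> Gamma (x + 1) = x * Gamma (x :: real)"
  by (rule Gamma_plus1) auto

lemma Gamma_half_div_fact_step:
  "Gamma (real (k + 2) / 2 + 1) / fact (k + 2) = Gamma (real k / 2 + 1) / fact k / (2 * (real k + 1))"
proof -
  have "real (k + 2) / 2 + 1 = (real k / 2 + 1) + 1" by simp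
  then have Gamma: "Gamma (real (k + 2) / 2 + 1) = (real k / 2 + 1) * Gamma (real k / 2 + 1)"
    by (simp only:) (rule Gamma_plus1_pos, simp add: add_nonneg_pos)
  have fact: "fact (k + 2) = (real k + 2) * (real k + 1) * fact k"
    by (simp add: fact_Suc algebra_simps numeral_2_eq_2)
  have cancel: "(y / 2 + 1) * G / ((y + 2) * (y + 1) * F) = G / F / (2 * (y + 1))"
    if "0 \<le> y" for y G F :: real
  proof -
    have "(y / 2 + 1) * G / ((y + 2) * (y + 1) * F) = (y + 2) * (G / 2) / ((y + 2) * ((y + 1) * F))"
      by (simp add: algebra_simps add_divide_distrib)
    also have "\<dots> = G / 2 / ((y + 1) * F)" using that by (intro mult_divide_mult_cancel_left) auto
    also have "\<dots> = G / F / (2 * (y + 1))" by (simp add: divide_divide_eq_left mult_ac)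
    finally show ?thesis .
  qed
  show ?thesis unfolding Gamma fact by (rule cancel) simp
qed

text \<open>The correction factor \<open>exp (3/k)\<close> makes the quotient non-increasing along \<open>k \<mapsto> k + 2\<close>.\<close>

definition stirling_quotient :: "nat \<Rightarrow> real" where
  "stirling_quotient k = (Gamma (real k / 2 + 1) / fact k)^2 * (2 * real k / exp 1)^k * exp (3 / real k)"

lemma stirling_exponent_ineq:
  fixes x :: real
  assumes x: "1 \<le> x"
  shows "2/(x+1) - 2/x + 8/(3*x^2) + 3/(x+2) \<le> 3/x"
proof -
  have x0: "x > 0" using x by simp
  have e1: "2/(x+1) - 2/x = - (2/(x*(x+1)))" using x0 by (simp add: field_simps)
  have e2: "3/(x+2) - 3/x = - (6/(x*(x+2)))" using x0 by (simp add: field_simps)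
  have "x*(x+1) \<le> x*(2*x)" using x0 x by (intro mult_left_mono) auto
  then have "2/(2*x^2) \<le> 2/(x*(x+1))" using x0 by (intro frac_le) (auto simp: power2_eq_square)
  then have i1: "1/x^2 \<le> 2/(x*(x+1))" by simp
  have "x*(x+2) \<le> x*(3*x)" using x0 x by (intro mult_left_mono) auto
  then have "6/(3*x^2) \<le> 6/(x*(x+2))" using x0 by (intro frac_le) (auto simp: power2_eq_square)
  then have i2: "2/x^2 \<le> 6/(x*(x+2))" by simp
  have "8/(3*x^2) = (8/3) * (1/x^2)" "2/x^2 = 2 * (1/x^2)" "1/x^2 \<ge> 0" by simp_all
  then show ?thesis using e1 e2 i1 i2 by linarith
qed

lemma stirling_step_factor_le:
  fixes k :: nat and x :: real
  assumes "x = real k" "1 \<le> k"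
  shows "(x + 2)^2 / (x + 1)^2 * ((x + 2) / x)^k * exp (3 / (x + 2)) / (exp 1)^2 \<le> exp (3 / x)"
proof -
  have x: "1 \<le> x" using assms by simp
  have A: "(x + 2)^2 / (x + 1)^2 \<le> exp (2 / (x + 1))"
  proof -
    have "(x + 2) / (x + 1) = 1 + 1 / (x + 1)" using x by (simp add: field_simps)
    also have "\<dots> \<le> exp (1 / (x + 1))" by (rule exp_ge_add_one_self)
    finally have "((x + 2) / (x + 1))^2 \<le> (exp (1 / (x + 1)))^2"
      using x by (intro power_mono) auto
    also have "(exp (1 / (x + 1)))^2 = exp (2 / (x + 1))"
      using exp_of_nat_mult[of 2 "1 / (x + 1)"] by simp
    finally show ?thesis by (simp add: power_divide)
  qed
  have B: "((x + 2) / x)^k \<le> exp (2 - 2/x + 8/(3*x^2))"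
  proof -
    have "(x + 2) / x = 1 + 2/x" using x by (simp add: field_simps)
    also have "\<dots> \<le> exp (2/x - (2/x)^2/2 + (2/x)^3/3)"
      by (rule one_plus_le_exp_cubic) (use x in simp)
    finally have "((x + 2) / x)^k \<le> (exp (2/x - (2/x)^2/2 + (2/x)^3/3))^k"
      using x by (intro power_mono) auto
    also have "\<dots> = exp (x * (2/x - (2/x)^2/2 + (2/x)^3/3))"
      using exp_of_nat_mult[of k "2/x - (2/x)^2/2 + (2/x)^3/3"] assms(1) by simp
    also have "x * (2/x - (2/x)^2/2 + (2/x)^3/3) = 2 - 2/x + 8/(3*x^2)"
      using x by (simp add: field_simps power2_eq_square power3_eq_cube)
    finally show ?thesis .
  qed
  have "(x + 2)^2 / (x + 1)^2 * ((x + 2) / x)^k * exp (3 / (x + 2)) / (exp 1)^2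
        \<le> exp (2 / (x + 1)) * exp (2 - 2/x + 8/(3*x^2)) * exp (3 / (x + 2)) / (exp 1)^2"
    using A B x by (intro divide_right_mono mult_right_mono mult_mono) auto
  also have "\<dots> = exp (2 / (x + 1) - 2/x + 8/(3*x^2) + 3 / (x + 2))"
  proof -
    have "(exp 1)^2 = exp (2::real)" using exp_of_nat_mult[of 2 "1::real"] by simp
    then show ?thesis by (simp add: exp_add[symmetric] exp_diff[symmetric])
  qed
  also have "\<dots> \<le> exp (3 / x)" using stirling_exponent_ineq[OF x] by simp
  finally show ?thesis .
qed

lemma stirling_quotient_step:
  assumes k: "1 \<le> k"
  shows "stirling_quotient (k + 2) \<le> stirling_quotient k"
proof -
  define x where "x = real k"
  have x: "1 \<le> x" using k by (simp add: x_def)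
  define r where "r = Gamma (real k / 2 + 1) / fact k"
  define F where "F = (x + 2)^2 / (x + 1)^2 * ((x + 2) / x)^k * exp (3 / (x + 2)) / (exp 1)^2"
  have "2 * (x + 2) / exp 1 = (2 * x / exp 1) * ((x + 2) / x)" using x by (simp add: field_simps)
  then have "(2 * (x + 2) / exp 1) ^ k = (2 * x / exp 1)^k * ((x + 2) / x)^k"
    by (simp only: power_mult_distrib)
  then have pow: "(2 * (x + 2) / exp 1) ^ (k + 2) = (2 * x / exp 1)^k * ((x + 2) / x)^k * (2 * (x + 2) / exp 1)^2"
    by (simp only: power_add)
  have regroup: "(r / (2 * c))^2 * (P * T * (2 * d / e)^2) * E = r^2 * P * (d^2 / c^2 * T * E / e^2)"
    if "c \<noteq> 0" "e \<noteq> 0" for c d e P T E :: real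
    using that by (simp add: field_simps power2_eq_square)
  have "stirling_quotient (k + 2) = (r / (2 * (x + 1)))^2 * (2 * (x + 2) / exp 1) ^ (k + 2) * exp (3 / (x + 2))"
    unfolding stirling_quotient_def Gamma_half_div_fact_step r_def x_def by (simp add: add.commute)
  also have "\<dots> = r^2 * (2 * x / exp 1)^k * F"
    unfolding pow F_def using x by (intro regroup) auto
  also have "\<dots> \<le> r^2 * (2 * x / exp 1)^k * exp (3 / x)"
    unfolding F_def using stirling_step_factor_le[OF x_def k] x by (intro mult_left_mono) auto
  also have "\<dots> = stirling_quotient k"
    by (simp add: stirling_quotient_def r_def x_def)
  finally show ?thesis .
qed

lemma stirling_quotient_pos:
  assumes "1 \<le> k"
  shows "0 < stirling_quotient k"
proof -
  have "0 < Gamma (real k / 2 + 1) / fact k" by (simp add: add_nonneg_pos)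
  moreover have "0 < 2 * real k / exp 1" using assms by simp
  ultimately show ?thesis unfolding stirling_quotient_def by (intro mult_pos_pos zero_less_power) auto
qed

lemma stirling_quotient_le_max:
  "1 \<le> k \<Longrightarrow> stirling_quotient k \<le> max (stirling_quotient 1) (stirling_quotient 2)"
proof (induction k rule: less_induct)
  case (less k)
  show ?case
  proof (cases "k \<le> 2")
    case True
    with less.prems have "k = 1 \<or> k = 2" by auto
    then show ?thesis by auto
  next
    case False
    define j where "j = k - 2"
    have k: "k = j + 2" using False by (simp add: j_def)
    have "stirling_quotient k \<le> stirling_quotient j"
      unfolding k by (rule stirling_quotient_step) (use False in \<open>simp add: j_def\<close>)
    also have "\<dots> \<le> max (stirling_quotient 1) (stirling_quotient 2)"
      using less.IH[of j] False k by simp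
    finally show ?thesis .
  qed
qed

lemma Gamma_half_div_fact_bound:
  "\<exists>B>0. \<forall>k\<ge>1. Gamma (real k / 2 + 1) / fact k \<le> B * (exp 1 / (2 * real k)) powr (real k / 2)"
proof (intro exI conjI allI impI)
  define Q where "Q = max (stirling_quotient 1) (stirling_quotient 2)"
  show "0 < sqrt Q" using stirling_quotient_pos[of 1] by (simp add: Q_def)
  fix k :: nat
  assume k: "1 \<le> k"
  define r where "r = Gamma (real k / 2 + 1) / fact k"
  define c where "c = (exp 1 / (2 * real k)) ^ k"
  have c: "0 < c" using k by (simp add: c_def)
  have "r^2 = stirling_quotient k * c / exp (3 / real k)"
    using k by (simp add: stirling_quotient_def r_def c_def power_divide field_simps)
  also have "\<dots> \<le> stirling_quotient k * c"
    using stirling_quotient_pos[OF k] c by (simp add: divide_le_eq)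
  also have "\<dots> \<le> Q * c"
    using stirling_quotient_le_max[OF k] c by (simp add: Q_def)
  finally have "r \<le> sqrt (Q * c)" by (rule real_le_rsqrt)
  also have "\<dots> = sqrt Q * sqrt c" by (rule real_sqrt_mult)
  also have "sqrt c = (exp 1 / (2 * real k)) powr (real k / 2)"
    using k by (simp add: c_def powr_half_sqrt_powr powr_realpow)
  finally show "Gamma (real k / 2 + 1) / fact k \<le> sqrt Q * (exp 1 / (2 * real k)) powr (real k / 2)"
    unfolding r_def .
qed

lemma exp_div_powr_antimono:
  assumes "1 \<le> n" "n \<le> k"
  shows "(exp 1 / (2 * real k)) powr (real k / 2) \<le> (exp 1 / (2 * real n)) powr (real n / 2)"
proof -
  have one_step: "(exp 1 / (2 * real (Suc j))) ^ Suc j \<le> (exp 1 / (2 * real j)) ^ j" if "1 \<le> j" for j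
  proof -
    have "exp 1 / (2 * (real j + 1)) \<le> 1"
      using exp_le that by (simp add: divide_le_eq)
    moreover have "(exp 1 / (2 * (real j + 1))) ^ j \<le> (exp 1 / (2 * real j)) ^ j"
      using that by (intro power_mono frac_le) auto
    ultimately have "(exp 1 / (2 * (real j + 1))) * (exp 1 / (2 * (real j + 1))) ^ j \<le> 1 * (exp 1 / (2 * real j)) ^ j"
      by (intro mult_mono) auto
    then show ?thesis by (simp add: add.commute)
  qed
  have "(exp 1 / (2 * real k)) ^ k \<le> (exp 1 / (2 * real n)) ^ n"
    using assms(2)
  proof (induction k rule: dec_induct)
    case (step j)
    then show ?case using one_step[of j] assms(1) by linarith
  qed simp
  then have "sqrt ((exp 1 / (2 * real k)) ^ k) \<le> sqrt ((exp 1 / (2 * real n)) ^ n)" by simp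
  then show ?thesis using assms by (simp add: powr_half_sqrt_powr powr_realpow)
qed

section \<open>Tails of the weighted kernel series\<close>

lemma summable_tail_bound:
  fixes f u :: "nat \<Rightarrow> real"
  assumes f_le: "\<And>k. k \<ge> n \<Longrightarrow> \<bar>f k\<bar> \<le> u k" and u: "summable u"
  shows "summable f" and "\<bar>suminf f - (\<Sum>k<n. f k)\<bar> \<le> (\<Sum>j. u (j + n))"
proof -
  show f: "summable f" by (rule summable_comparison_test'[OF u, of n]) (use f_le in simp)
  have tail: "suminf f - (\<Sum>k<n. f k) = (\<Sum>j. f (j + n))"
    using suminf_split_initial_segment[OF f, of n] by simp
  have f_shift: "summable (\<lambda>j. f (j + n))" by (rule summable_ignore_initial_segment[OF f])
  have u_shift: "summable (\<lambda>j. u (j + n))" by (rule summable_ignore_initial_segment[OF u])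
  have "(\<Sum>j. f (j + n)) \<le> (\<Sum>j. u (j + n))"
    by (rule suminf_le[OF _ f_shift u_shift]) (use f_le in \<open>auto simp: abs_le_iff\<close>)
  moreover have "(\<Sum>j. - u (j + n)) \<le> (\<Sum>j. f (j + n))"
  proof (rule suminf_le[OF _ summable_minus[OF u_shift] f_shift])
    show "- u (j + n) \<le> f (j + n)" for j using f_le[of "j + n"] by (simp add: abs_le_iff)
  qed
  ultimately show "\<bar>suminf f - (\<Sum>k<n. f k)\<bar> \<le> (\<Sum>j. u (j + n))"
    unfolding tail suminf_minus[OF u_shift] by (simp add: abs_le_iff)
qed

lemma summable_power_div_fact: "summable (\<lambda>k. (x::real) ^ k / fact k)"
  using summable_exp[of x] by (simp add: divide_inverse mult.commute)

lemma Gamma_half_weighted_term_bound: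
  fixes c :: "nat \<Rightarrow> real" and X B :: real
  assumes X: "0 \<le> X" and c: "\<And>k. \<bar>c k\<bar> \<le> X ^ k / (fact k)\<^sup>2"
    and B: "B > 0" "\<forall>k\<ge>1. Gamma (real k / 2 + 1) / fact k \<le> B * (exp 1 / (2 * real k)) powr (real k / 2)"
    and "1 \<le> n" "n \<le> k"
  shows "\<bar>Gamma (real k / 2 + 1) * c k\<bar> \<le> B * (exp 1 / (2 * real n)) powr (real n / 2) * (X ^ k / fact k)"
proof -
  have G: "Gamma (real k / 2 + 1) > 0" by (simp add: add_nonneg_pos)
  have "\<bar>Gamma (real k / 2 + 1) * c k\<bar> = Gamma (real k / 2 + 1) * \<bar>c k\<bar>"
    using G by (simp add: abs_mult)
  also have "\<dots> \<le> Gamma (real k / 2 + 1) * (X ^ k / (fact k)\<^sup>2)"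
    using G c by (intro mult_left_mono) auto
  also have "\<dots> = (Gamma (real k / 2 + 1) / fact k) * (X ^ k / fact k)" by (simp add: power2_eq_square)
  also have "\<dots> \<le> (B * (exp 1 / (2 * real k)) powr (real k / 2)) * (X ^ k / fact k)"
    using B(2) assms(5,6) X by (intro mult_right_mono) auto
  also have "\<dots> \<le> (B * (exp 1 / (2 * real n)) powr (real n / 2)) * (X ^ k / fact k)"
    using exp_div_powr_antimono[OF assms(5,6)] B(1) X by (intro mult_right_mono mult_left_mono) auto
  finally show ?thesis .
qed

lemma Gamma_half_weighted_series:
  fixes c :: "nat \<Rightarrow> real" and X B :: real
  assumes X: "0 \<le> X" and c: "\<And>k. \<bar>c k\<bar> \<le> X ^ k / (fact k)\<^sup>2"
    and B: "B > 0" "\<forall>k\<ge>1. Gamma (real k / 2 + 1) / fact k \<le> B * (exp 1 / (2 * real k)) powr (real k / 2)"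
  shows "summable (\<lambda>k. Gamma (real k / 2 + 1) * c k)"
    and "\<bar>(\<Sum>k. Gamma (real k / 2 + 1) * c k) - (\<Sum>k\<le>N. Gamma (real k / 2 + 1) * c k)\<bar>
           \<le> B * (exp 1 / (2 * real N + 2)) powr ((real N + 1) / 2) * exp_tail (N + 1) X"
proof -
  define K where "K n = B * (exp 1 / (2 * real n)) powr (real n / 2)" for n :: nat
  have bound: "\<bar>Gamma (real k / 2 + 1) * c k\<bar> \<le> K n * (X ^ k / fact k)" if "1 \<le> n" "n \<le> k" for n k
    unfolding K_def using Gamma_half_weighted_term_bound[OF X c B that] .
  have u: "summable (\<lambda>k. K n * (X ^ k / fact k))" for n
    by (rule summable_mult[OF summable_power_div_fact])
  show "summable (\<lambda>k. Gamma (real k / 2 + 1) * c k)"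
    using summable_tail_bound(1)[OF bound u] by blast
  have "\<bar>(\<Sum>k. Gamma (real k / 2 + 1) * c k) - (\<Sum>k<Suc N. Gamma (real k / 2 + 1) * c k)\<bar>
        \<le> (\<Sum>j. K (Suc N) * (X ^ (j + Suc N) / fact (j + Suc N)))"
    by (rule summable_tail_bound(2)[OF bound u]) auto
  also have "\<dots> = K (Suc N) * exp_tail (N + 1) X"
    unfolding exp_tail_def
    by (subst suminf_mult[OF summable_ignore_initial_segment[OF summable_power_div_fact]]) simp
  also have "K (Suc N) = B * (exp 1 / (2 * real N + 2)) powr ((real N + 1) / 2)"
    unfolding K_def by (simp add: add.commute)
  finally show "\<bar>(\<Sum>k. Gamma (real k / 2 + 1) * c k) - (\<Sum>k\<le>N. Gamma (real k / 2 + 1) * c k)\<bar>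
           \<le> B * (exp 1 / (2 * real N + 2)) powr ((real N + 1) / 2) * exp_tail (N + 1) X"
    unfolding lessThan_Suc_atMost .
qed

lemma Gamma_add_nat_ge:
  fixes m :: real
  assumes "0 \<le> m"
  shows "fact k * Gamma (m + 1) \<le> Gamma (real k + m + 1)"
proof (induction k)
  case (Suc k)
  have "Gamma (real (Suc k) + m + 1) = (real k + m + 1) * Gamma (real k + m + 1)"
    using Gamma_plus1_pos[of "real k + m + 1"] assms by (simp add: add_ac)
  also have "\<dots> \<ge> (real k + 1) * (fact k * Gamma (m + 1))"
    using Suc assms by (intro mult_mono) auto
  finally show ?case by (simp add: algebra_simps)
qed simp

lemma summable_power_div_Gamma_fact:
  fixes X m :: real
  assumes X: "0 \<le> X" and m: "0 \<le> m"
  shows "summable (\<lambda>k. X ^ k / (Gamma (real k + m + 1) * fact k))"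
proof (rule summable_comparison_test'[OF summable_mult[OF summable_power_div_fact[of X], of "1 / Gamma (m + 1)"], of 0])
  fix k :: nat
  have Gm: "Gamma (m + 1) > 0" using m by (simp add: add_nonneg_pos)
  have "Gamma (m + 1) \<le> fact k * Gamma (m + 1)" using Gm by simp
  also have "\<dots> \<le> Gamma (real k + m + 1)" by (rule Gamma_add_nat_ge[OF m])
  finally have "Gamma (m + 1) * fact k \<le> Gamma (real k + m + 1) * fact k"
    by (simp add: mult_right_mono)
  then show "norm (X ^ k / (Gamma (real k + m + 1) * fact k)) \<le> 1 / Gamma (m + 1) * (X ^ k / fact k)"
    using X Gm by (simp add: frac_le)
qed

lemma bessel_I_tail_two_sqrt:
  fixes X m :: real
  assumes "0 < X"
  shows "bessel_I_tail m M (2 * sqrt X)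
           = X powr (m / 2) * (\<Sum>j. X ^ (j + M) / (Gamma (real (j + M) + m + 1) * fact (j + M)))"
proof -
  have sq: "(2 * sqrt X)\<^sup>2 / 4 = X" using assms by (simp add: power_mult_distrib)
  have "(2 * sqrt X / 2) powr m = (X powr (1 / 2)) powr m"
    using assms by (simp add: powr_half_sqrt)
  then have pow: "(2 * sqrt X / 2) powr m = X powr (m / 2)" by (simp add: powr_powr)
  have fact: "Gamma (real n + 1) = fact n" for n using Gamma_fact[of n] by (simp add: add.commute)
  show ?thesis unfolding bessel_I_tail_def sq pow fact by simp
qed

lemma beta_weighted_series:
  fixes c :: "nat \<Rightarrow> real" and X m :: real
  assumes X: "0 \<le> X" and m: "0 \<le> m" and c: "\<And>k. \<bar>c k\<bar> \<le> X ^ k / (fact k)\<^sup>2"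
  shows "summable (\<lambda>k. Gamma (m + 1) * Gamma (real k + 1) / Gamma (real k + m + 1) * c k)"
    and "\<bar>(\<Sum>k. Gamma (m + 1) * Gamma (real k + 1) / Gamma (real k + m + 1) * c k)
           - (\<Sum>k\<le>N. Gamma (m + 1) * Gamma (real k + 1) / Gamma (real k + m + 1) * c k)\<bar>
         \<le> Gamma (m + 1) / X powr (m / 2) * bessel_I_tail m (N + 1) (2 * sqrt X)"
proof -
  define w where "w k = X ^ k / (Gamma (real k + m + 1) * fact k)" for k
  have w: "summable w" unfolding w_def by (rule summable_power_div_Gamma_fact[OF X m])
  have bound: "\<bar>Gamma (m + 1) * Gamma (real k + 1) / Gamma (real k + m + 1) * c k\<bar> \<le> Gamma (m + 1) * w k"
    if "0 \<le> k" for k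
  proof -
    have "Gamma (m + 1) > 0" "Gamma (real k + m + 1) > 0" using m by (simp_all add: add_nonneg_pos)
    moreover have "Gamma (real k + 1) = fact k" using Gamma_fact[of k] by (simp add: add.commute)
    ultimately show ?thesis
      using mult_left_mono[OF c[of k], of "Gamma (m + 1) * fact k / Gamma (real k + m + 1)"]
      by (simp add: abs_mult w_def power2_eq_square)
  qed
  have u: "summable (\<lambda>k. Gamma (m + 1) * w k)" by (rule summable_mult[OF w])
  show "summable (\<lambda>k. Gamma (m + 1) * Gamma (real k + 1) / Gamma (real k + m + 1) * c k)"
    using summable_tail_bound(1)[OF bound u] by blast
  have "\<bar>(\<Sum>k. Gamma (m + 1) * Gamma (real k + 1) / Gamma (real k + m + 1) * c k)
          - (\<Sum>k<Suc N. Gamma (m + 1) * Gamma (real k + 1) / Gamma (real k + m + 1) * c k)\<bar>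
        \<le> (\<Sum>j. Gamma (m + 1) * w (j + Suc N))"
    by (rule summable_tail_bound(2)[OF bound u]) simp
  also have "\<dots> = Gamma (m + 1) * (\<Sum>j. w (j + Suc N))"
    by (rule suminf_mult[OF summable_ignore_initial_segment[OF w]])
  also have "\<dots> \<le> Gamma (m + 1) / X powr (m / 2) * bessel_I_tail m (N + 1) (2 * sqrt X)"
  proof (cases "X = 0")
    case True
    then show ?thesis by (simp add: w_def bessel_I_tail_def)
  next
    case False
    then show ?thesis using X bessel_I_tail_two_sqrt[of X m "N + 1"] by (simp add: w_def)
  qed
  finally show "\<bar>(\<Sum>k. Gamma (m + 1) * Gamma (real k + 1) / Gamma (real k + m + 1) * c k)
           - (\<Sum>k\<le>N. Gamma (m + 1) * Gamma (real k + 1) / Gamma (real k + m + 1) * c k)\<bar>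
         \<le> Gamma (m + 1) / X powr (m / 2) * bessel_I_tail m (N + 1) (2 * sqrt X)"
    unfolding lessThan_Suc_atMost .
qed

theorem mainTheorem6:
  fixes \<gamma> \<sigma> :: "real \<Rightarrow> 'a::euclidean_space" and a b :: real
  assumes "a \<le> b"
    and "continuous_on {a..b} \<gamma>" and "continuous_on {a..b} \<sigma>"
    and "bounded_variation_on \<gamma> a b" and "bounded_variation_on \<sigma> a b"
  shows
    "(let \<phi> = (\<lambda>k. Gamma (real k / 2 + 1)) in
       (\<forall>s\<in>{a..b}. \<forall>t\<in>{a..b}. phi_sig_kernel_welldef \<phi> \<gamma> \<sigma> a s t) \<and>
       (\<exists>C. \<forall>N. \<forall>s\<in>{a..b}. \<forall>t\<in>{a..b}.
          \<bar>phi_sig_kernel \<phi> \<gamma> \<sigma> a s t - phi_sig_kernel_trunc \<phi> N \<gamma> \<sigma> a s t\<bar>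
            \<le> C * (exp 1 / (2 * real N + 2)) powr ((real N + 1) / 2)
                * exp_tail (N + 1) (path_length \<gamma> a s * path_length \<sigma> a t)))
     \<and>
     (\<forall>m::real. m \<ge> 0 \<longrightarrow>
       (let \<phi> = (\<lambda>k. Gamma (m + 1) * Gamma (real k + 1) / Gamma (real k + m + 1)) in
         (\<forall>s\<in>{a..b}. \<forall>t\<in>{a..b}. phi_sig_kernel_welldef \<phi> \<gamma> \<sigma> a s t) \<and>
         (\<forall>N. \<forall>s\<in>{a..b}. \<forall>t\<in>{a..b}.
            \<bar>phi_sig_kernel \<phi> \<gamma> \<sigma> a s t - phi_sig_kernel_trunc \<phi> N \<gamma> \<sigma> a s t\<bar>
              \<le> Gamma (m + 1) / (path_length \<gamma> a s * path_length \<sigma> a t) powr (m / 2)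
                * bessel_I_tail m (N + 1)
                    (2 * sqrt (path_length \<gamma> a s * path_length \<sigma> a t)))))"
proof -
  obtain B where B: "B > 0"
    "\<forall>k\<ge>1. Gamma (real k / 2 + 1) / fact k \<le> B * (exp 1 / (2 * real k)) powr (real k / 2)"
    using Gamma_half_div_fact_bound by blast
  have L: "0 \<le> path_length \<gamma> a s * path_length \<sigma> a t"
    and sig: "\<And>k. \<bar>sig_inner \<gamma> \<sigma> a k s t\<bar> \<le> (path_length \<gamma> a s * path_length \<sigma> a t) ^ k / (fact k)\<^sup>2"
    if "s \<in> {a..b}" "t \<in> {a..b}" for s t
    using that path_length_nonneg[OF assms(4)] path_length_nonneg[OF assms(5)] sig_inner_bound[OF assms that]
    by auto
  note part1 = Gamma_half_weighted_series[OF L sig B]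
  note part2 = beta_weighted_series[OF L _ sig]
  show ?thesis
    unfolding Let_def phi_sig_kernel_welldef_def phi_sig_kernel_def phi_sig_kernel_trunc_def
    by (intro conjI exI[of _ B] allI impI ballI part1 part2)
qed
end
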